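(* If $0\to(M,\alpha_M)\to(K,\alpha_K)\xrightarrow{\pi}(L,\alpha_L)\to0$ is a universal $\alpha$-central extension of Hom-Leibniz $n$-algebras, then ${}_nHL_0^\alpha(K)={}_nHL_1^\alpha(K)=0$.
   Context: Fix a field $\mathbb K$ and $n\ge2$. A (multiplicative) Hom-Leibniz $n$-algebra is a $\mathbb K$-vector space $L$ with an $n$-linear bracket and a linear map $\alpha_L$ preserving the bracket, satisfying $[[x_1,\dots,x_n],\alpha_L(y_1),\dots,\alpha_L(y_{n-1})]=\sum_{i=1}^n[\alpha_L(x_1),\dots,[x_i,y_1,\dots,y_{n-1}],\dots,\alpha_L(x_n)]$. Homomorphisms preserve brackets and commute with twisting maps. Center $Z(K)$: elements $x$ with every bracket having $x$ in some position equal to $0$. An extension of $L$ is a surjective homomorphism $\pi:K\to L$ with kernel $M$; central if $M\subseteq Z(K)$; $\alpha$-central if every bracket with $n-1$ entries in $\alpha_K(M)$ and the remaining entry (any position) in $K$ vanishes. A central extension $\pi$ is universal $\alpha$-central if for every $\alpha$-central extension $\pi':K'\to L$ there is a unique homomorphism $h:K\to K'$ with $\pi'\circ h=\pi$. For a Hom-Leibniz $n$-algebra $(K,\alpha_K)$ define $\delta_1:K^{\otimes n}\to K$, $\delta_1(x_1\otimes\dots\otimes x_n)=[x_1,\dots,x_n]$, and $\delta_2:K^{\otimes(2n-1)}\to K^{\otimes n}$, $\delta_2(x_1\otimes\dots\otimes x_n\otimes y_1\otimes\dots\otimes y_{n-1})=[x_1,\dots,x_n]\otimes\alpha_K(y_1)\otimes\dots\otimes\alpha_K(y_{n-1})-\sum_{i=1}^n\alpha_K(x_1)\otimes\dots\otimes[x_i,y_1,\dots,y_{n-1}]\otimes\dots\otimes\alpha_K(x_n)$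 (in the $i$-th term all factors other than the $i$-th are $\alpha_K(x_j)$). Then ${}_nHL_0^\alpha(K)=K/[K,\dots,K]$ and ${}_nHL_1^\alpha(K)=\ker\delta_1/\operatorname{im}\delta_2$. *)

theory Defs
  imports Main
begin

record ('k, 'a) hom_nalg =
  carrier :: "'a set"
  add :: "'a \<Rightarrow> 'a \<Rightarrow> 'a"
  zero :: "'a"
  smult :: "'k \<Rightarrow> 'a \<Rightarrow> 'a"
  brk :: "'a list \<Rightarrow> 'a"
  tw :: "'a \<Rightarrow> 'a"

definition vspace :: "('k::field, 'a) hom_nalg \<Rightarrow> bool" where
  "vspace V \<longleftrightarrow>
     zero V \<in> carrier V \<and>
     (\<forall>x\<in>carrier V. \<forall>y\<in>carrier V. add V x y \<in> carrier V) \<and>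
     (\<forall>c. \<forall>x\<in>carrier V. smult V c x \<in> carrier V) \<and>
     (\<forall>x\<in>carrier V. \<forall>y\<in>carrier V. \<forall>z\<in>carrier V. add V (add V x y) z = add V x (add V y z)) \<and>
     (\<forall>x\<in>carrier V. \<forall>y\<in>carrier V. add V x y = add V y x) \<and>
     (\<forall>x\<in>carrier V. add V (zero V) x = x) \<and>
     (\<forall>x\<in>carrier V. \<exists>y\<in>carrier V. add V x y = zero V) \<and>
     (\<forall>c. \<forall>x\<in>carrier V. \<forall>y\<in>carrier V. smult V c (add V x y) = add V (smult V c x) (smult V c y)) \<and>
     (\<forall>a b. \<forall>x\<in>carrier V. smult V (a + b) x = add V (smult V a x) (smult V b x)) \<and>
     (\<forall>a b. \<forall>x\<in>carrier V. smult V (a * b) x = smult V a (smult V b x)) \<and>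
     (\<forall>x\<in>carrier V. smult V 1 x = x)"

definition tuples :: "nat \<Rightarrow> 'a set \<Rightarrow> 'a list set" where
  "tuples m A = {xs. length xs = m \<and> set xs \<subseteq> A}"

definition lsum :: "('k, 'a) hom_nalg \<Rightarrow> 'a list \<Rightarrow> 'a" where
  "lsum V xs = foldr (add V) xs (zero V)"

definition hom_leibniz_nalg :: "nat \<Rightarrow> ('k::field, 'a) hom_nalg \<Rightarrow> bool" where
  "hom_leibniz_nalg n V \<longleftrightarrow>
     vspace V \<and>
     \<comment> \<open>the bracket is n-linear\<close>
     (\<forall>xs\<in>tuples n (carrier V). brk V xs \<in> carrier V) \<and>
     (\<forall>xs\<in>tuples n (carrier V). \<forall>i<n. \<forall>a\<in>carrier V. \<forall>b\<in>carrier V.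
        brk V (xs[i := add V a b]) = add V (brk V (xs[i := a])) (brk V (xs[i := b]))) \<and>
     (\<forall>xs\<in>tuples n (carrier V). \<forall>i<n. \<forall>c. \<forall>a\<in>carrier V.
        brk V (xs[i := smult V c a]) = smult V c (brk V (xs[i := a]))) \<and>
     \<comment> \<open>the twisting map is linear and multiplicative\<close>
     (\<forall>x\<in>carrier V. tw V x \<in> carrier V) \<and>
     (\<forall>x\<in>carrier V. \<forall>y\<in>carrier V. tw V (add V x y) = add V (tw V x) (tw V y)) \<and>
     (\<forall>c. \<forall>x\<in>carrier V. tw V (smult V c x) = smult V c (tw V x)) \<and>
     (\<forall>xs\<in>tuples n (carrier V). tw V (brk V xs) = brk V (map (tw V) xs)) \<and>
     \<comment> \<open>the Hom-Leibniz n-identity\<close>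
     (\<forall>xs\<in>tuples n (carrier V). \<forall>ys\<in>tuples (n - 1) (carrier V).
        brk V (brk V xs # map (tw V) ys) =
        lsum V (map (\<lambda>i. brk V ((map (tw V) xs)[i := brk V (xs ! i # ys)])) [0..<n]))"

definition hom :: "nat \<Rightarrow> ('k::field, 'a) hom_nalg \<Rightarrow> ('k, 'b) hom_nalg \<Rightarrow> ('a \<Rightarrow> 'b) \<Rightarrow> bool" where
  "hom n V W f \<longleftrightarrow>
     (\<forall>x\<in>carrier V. f x \<in> carrier W) \<and>
     (\<forall>x\<in>carrier V. \<forall>y\<in>carrier V. f (add V x y) = add W (f x) (f y)) \<and>
     (\<forall>c. \<forall>x\<in>carrier V. f (smult V c x) = smult W c (f x)) \<and>
     (\<forall>xs\<in>tuples n (carrier V). f (brk V xs) = brk W (map f xs)) \<and>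
     (\<forall>x\<in>carrier V. f (tw V x) = tw W (f x))"

definition extension :: "nat \<Rightarrow> ('k::field, 'a) hom_nalg \<Rightarrow> ('k, 'b) hom_nalg \<Rightarrow> ('a \<Rightarrow> 'b) \<Rightarrow> bool" where
  "extension n K L \<pi> \<longleftrightarrow>
     hom_leibniz_nalg n K \<and> hom_leibniz_nalg n L \<and> hom n K L \<pi> \<and> \<pi> ` carrier K = carrier L"

definition kernel :: "('k, 'a) hom_nalg \<Rightarrow> ('k, 'b) hom_nalg \<Rightarrow> ('a \<Rightarrow> 'b) \<Rightarrow> 'a set" where
  "kernel K L \<pi> = {x \<in> carrier K. \<pi> x = zero L}"

definition center :: "nat \<Rightarrow> ('k, 'a) hom_nalg \<Rightarrow> 'a set" where
  "center n K = {x \<in> carrier K. \<forall>xs\<in>tuples n (carrier K). \<forall>i<n. brk K (xs[i := x]) = zero K}"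

definition central_extension :: "nat \<Rightarrow> ('k::field, 'a) hom_nalg \<Rightarrow> ('k, 'b) hom_nalg \<Rightarrow> ('a \<Rightarrow> 'b) \<Rightarrow> bool" where
  "central_extension n K L \<pi> \<longleftrightarrow> extension n K L \<pi> \<and> kernel K L \<pi> \<subseteq> center n K"

definition alpha_central_extension :: "nat \<Rightarrow> ('k::field, 'a) hom_nalg \<Rightarrow> ('k, 'b) hom_nalg \<Rightarrow> ('a \<Rightarrow> 'b) \<Rightarrow> bool" where
  "alpha_central_extension n K L \<pi> \<longleftrightarrow> extension n K L \<pi> \<and>
     (\<forall>xs i. length xs = n \<and> i < n \<and> xs ! i \<in> carrier K \<and>
        (\<forall>j<n. j \<noteq> i \<longrightarrow> xs ! j \<in> tw K ` kernel K L \<pi>) \<longrightarrow> brk K xs = zero K)"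

text \<open>Since HOL cannot quantify over types inside a
formula, the competing alpha-central extensions K' range over all structures whose
carrier lives in the (large) type (a list => k) set.
Uniqueness of h is uniqueness as a map on the carrier of K.\<close>
definition universal_alpha_central_extension ::
  "nat \<Rightarrow> ('k::field, 'a) hom_nalg \<Rightarrow> ('k, 'b) hom_nalg \<Rightarrow> ('a \<Rightarrow> 'b) \<Rightarrow> bool" where
  "universal_alpha_central_extension n K L \<pi> \<longleftrightarrow> central_extension n K L \<pi> \<and>
     (\<forall>(K' :: ('k, ('a list \<Rightarrow> 'k) set) hom_nalg) \<pi>'. alpha_central_extension n K' L \<pi>' \<longrightarrow>
        (\<exists>h. hom n K K' h \<and> (\<forall>x\<in>carrier K. \<pi>' (h x) = \<pi> x) \<and>
           (\<forall>h'. hom n K K' h' \<and> (\<forall>x\<in>carrier K. \<pi>' (h' x) = \<pi> x) \<longrightarrow>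
                 (\<forall>x\<in>carrier K. h' x = h x))))"

inductive_set vspan :: "('k, 'a) hom_nalg \<Rightarrow> 'a set \<Rightarrow> 'a set" for V S where
  zero: "zero V \<in> vspan V S"
| gen: "x \<in> S \<Longrightarrow> x \<in> vspan V S"
| add: "x \<in> vspan V S \<Longrightarrow> y \<in> vspan V S \<Longrightarrow> add V x y \<in> vspan V S"
| smult: "x \<in> vspan V S \<Longrightarrow> smult V c x \<in> vspan V S"

definition derived :: "nat \<Rightarrow> ('k, 'a) hom_nalg \<Rightarrow> 'a set" where
  "derived n K = vspan K (brk K ` tuples n (carrier K))"

text \<open>nHL_0(K) = K/[K,...,K] is zero.\<close>
definition HL0_zero :: "nat \<Rightarrow> ('k, 'a) hom_nalg \<Rightarrow> bool" where
  "HL0_zero n K \<longleftrightarrow> carrier K \<subseteq> derived n K"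

text \<open>K^{\<otimes>m} is realised as the free vector space on m-tuples of elements
of K (finitely supported functions 'a list \<Rightarrow> 'k) modulo the subspace spanned by the
multilinearity relations. Elements of the free space are written as formal combinations
given by lists of (coefficient, tuple) pairs.\<close>

inductive_set fspan :: "('x \<Rightarrow> 'k::field) set \<Rightarrow> ('x \<Rightarrow> 'k) set" for S where
  zero: "(\<lambda>_. 0) \<in> fspan S"
| gen: "f \<in> S \<Longrightarrow> f \<in> fspan S"
| add: "f \<in> fspan S \<Longrightarrow> g \<in> fspan S \<Longrightarrow> (\<lambda>t. f t + g t) \<in> fspan S"
| smult: "f \<in> fspan S \<Longrightarrow> (\<lambda>t. c * f t) \<in> fspan S"

definition ind :: "'x \<Rightarrow> 'x \<Rightarrow> 'k::field" where
  "ind t = (\<lambda>s. if s = t then 1 else 0)"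

definition formal :: "('k::field \<times> 'x) list \<Rightarrow> 'x \<Rightarrow> 'k" where
  "formal ps = (\<lambda>s. sum_list (map (\<lambda>(c, t). c * ind t s) ps))"

definition tensor_rels :: "nat \<Rightarrow> ('k::field, 'a) hom_nalg \<Rightarrow> ('a list \<Rightarrow> 'k) set" where
  "tensor_rels m K =
     {(\<lambda>s. ind (xs[i := add K a b]) s - ind (xs[i := a]) s - ind (xs[i := b]) s) | xs i a b.
        xs \<in> tuples m (carrier K) \<and> i < m \<and> a \<in> carrier K \<and> b \<in> carrier K} \<union>
     {(\<lambda>s. ind (xs[i := smult K c a]) s - c * ind (xs[i := a]) s) | xs i c a.
        xs \<in> tuples m (carrier K) \<and> i < m \<and> a \<in> carrier K}"

text \<open>delta_2 applied to the pure tensor x_1 \<otimes> ... \<otimes> x_n \<otimes> y_1 \<otimes> ... \<otimes> y_(n-1),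
as an element of the free space on n-tuples.\<close>
definition delta2_pure :: "nat \<Rightarrow> ('k::field, 'a) hom_nalg \<Rightarrow> 'a list \<Rightarrow> 'a list \<Rightarrow> 'a list \<Rightarrow> 'k" where
  "delta2_pure n K xs ys =
     (\<lambda>s. ind (brk K xs # map (tw K) ys) s
          - (\<Sum>i<n. ind ((map (tw K) xs)[i := brk K (xs ! i # ys)]) s))"

definition delta2_image :: "nat \<Rightarrow> ('k::field, 'a) hom_nalg \<Rightarrow> ('a list \<Rightarrow> 'k) set" where
  "delta2_image n K =
     {delta2_pure n K xs ys | xs ys. xs \<in> tuples n (carrier K) \<and> ys \<in> tuples (n - 1) (carrier K)}"

definition delta1 :: "('k, 'a) hom_nalg \<Rightarrow> ('k \<times> 'a list) list \<Rightarrow> 'a" where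
  "delta1 K ps = lsum K (map (\<lambda>(c, t). smult K c (brk K t)) ps)"

text \<open>nHL_1(K) = ker delta_1 / im delta_2 is zero: every element of K^{\<otimes>n} in the kernel of
delta_1 lies in the image of delta_2, i.e. any representing formal combination lies in the
span of the delta_2-images of pure tensors plus the multilinearity relations.\<close>
definition HL1_zero :: "nat \<Rightarrow> ('k::field, 'a) hom_nalg \<Rightarrow> bool" where
  "HL1_zero n K \<longleftrightarrow>
     (\<forall>ps. (\<forall>(c, t)\<in>set ps. t \<in> tuples n (carrier K)) \<and> delta1 K ps = zero K \<longrightarrow>
        formal ps \<in> fspan (delta2_image n K \<union> tensor_rels n K))"

end

theory Submission
  imports Defs
begin

text \<open>
  HL0: let A = K/[K,\<dots>,K] with zero bracket. The pairs K \<times> A, bracketed in the first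
  component only, form an \<alpha>-central extension of L through the first projection, and both
  x \<mapsto> (x, 0) and x \<mapsto> (x, [x]) are morphisms over L. Uniqueness in the universal property
  gives [x] = 0, so K is perfect.

  HL1: let T be the n-th tensor power of K modulo the image of \<delta>2. The pairs (\<delta>1 t, [t])
  form an extension U of K with bracket [x1,\<dots>,xn] \<mapsto> ([x1,\<dots>,xn], [x1 \<otimes> \<dots> \<otimes> xn]). Its bracket vanishes on
  \<alpha>-central tuples: by perfectness the free entry is a sum of brackets, and each resulting
  tensor is, modulo a \<delta>2-boundary, a sum of tensors with a bracket containing a central
  entry. So U is \<alpha>-central over L, universality yields a section h of U \<rightarrow> K over L, and
  h(\<delta>1 t) = (\<delta>1 t, [t]) shows that \<delta>1 t = 0 forces [t] = 0.
\<close>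

lemma lsum_Nil [simp]: "lsum V [] = zero V"
  and lsum_Cons [simp]: "lsum V (x # xs) = add V x (lsum V xs)"
  by (simp_all add: lsum_def)

context
  fixes V :: "('k::field, 'a) hom_nalg"
  assumes V: "vspace V"
begin

lemma
  shows vspace_zero_closed [simp]: "zero V \<in> carrier V"
  and vspace_add_closed [simp]: "\<And>x y. x \<in> carrier V \<Longrightarrow> y \<in> carrier V \<Longrightarrow> add V x y \<in> carrier V"
  and vspace_smult_closed [simp]: "\<And>c x. x \<in> carrier V \<Longrightarrow> smult V c x \<in> carrier V"
  and vspace_add_assoc: "\<And>x y z. x \<in> carrier V \<Longrightarrow> y \<in> carrier V \<Longrightarrow> z \<in> carrier V \<Longrightarrow>
    add V (add V x y) z = add V x (add V y z)"
  and vspace_add_commute: "\<And>x y. x \<in> carrier V \<Longrightarrow> y \<in> carrier V \<Longrightarrow> add V x y = add V y x"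
  and vspace_zero_add [simp]: "\<And>x. x \<in> carrier V \<Longrightarrow> add V (zero V) x = x"
  and vspace_add_inverse: "\<And>x. x \<in> carrier V \<Longrightarrow> \<exists>y\<in>carrier V. add V x y = zero V"
  and vspace_smult_add_right: "\<And>c x y. x \<in> carrier V \<Longrightarrow> y \<in> carrier V \<Longrightarrow>
    smult V c (add V x y) = add V (smult V c x) (smult V c y)"
  and vspace_smult_add_left:
    "\<And>a b x. x \<in> carrier V \<Longrightarrow> smult V (a + b) x = add V (smult V a x) (smult V b x)"
  and vspace_smult_smult: "\<And>a b x. x \<in> carrier V \<Longrightarrow> smult V (a * b) x = smult V a (smult V b x)"
  and vspace_smult_one [simp]: "\<And>x. x \<in> carrier V \<Longrightarrow> smult V 1 x = x"
  by (use V in \<open>unfold vspace_def, meson\<close>)+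

lemma vspace_add_left_commute:
  "x \<in> carrier V \<Longrightarrow> y \<in> carrier V \<Longrightarrow> z \<in> carrier V \<Longrightarrow> add V x (add V y z) = add V y (add V x z)"
  by (metis vspace_add_assoc vspace_add_commute)

lemma vspace_add_zero [simp]: "x \<in> carrier V \<Longrightarrow> add V x (zero V) = x"
  by (metis vspace_add_commute vspace_zero_add vspace_zero_closed)

lemma vspace_add_left_cancel:
  assumes "x \<in> carrier V" "y \<in> carrier V" "z \<in> carrier V" "add V x y = add V x z"
  shows "y = z"
proof -
  obtain w where w: "w \<in> carrier V" "add V w x = zero V"
    using vspace_add_inverse assms(1) vspace_add_commute by metis
  have "add V w (add V x y) = add V w (add V x z)"
    using assms(4) by simp
  then show ?thesis
    using assms w by (metis vspace_add_assoc vspace_zero_add)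
qed

lemma vspace_smult_zero_left [simp]: "x \<in> carrier V \<Longrightarrow> smult V 0 x = zero V"
  by (rule vspace_add_left_cancel[of "smult V 0 x"])
    (simp_all flip: vspace_smult_add_left)

lemma vspace_smult_zero_right [simp]: "smult V c (zero V) = zero V"
  by (metis mult_zero_right vspace_smult_zero_left vspace_smult_smult vspace_zero_closed)

lemma vspace_add_neg [simp]: "x \<in> carrier V \<Longrightarrow> add V x (smult V (-1) x) = zero V"
  by (metis add.right_inverse vspace_smult_add_left vspace_smult_one vspace_smult_zero_left)

lemma lsum_closed [simp]: "set xs \<subseteq> carrier V \<Longrightarrow> lsum V xs \<in> carrier V"
  by (induction xs) auto

lemma lsum_zeros: "\<forall>x\<in>set xs. x = zero V \<Longrightarrow> lsum V xs = zero V"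
  by (induction xs) auto

end

lemma tuplesI: "length xs = m \<Longrightarrow> set xs \<subseteq> A \<Longrightarrow> xs \<in> tuples m A"
  and tuples_length: "xs \<in> tuples m A \<Longrightarrow> length xs = m"
  and tuples_set: "xs \<in> tuples m A \<Longrightarrow> set xs \<subseteq> A"
  by (simp_all add: tuples_def)

lemma tuples_nth: "xs \<in> tuples m A \<Longrightarrow> i < m \<Longrightarrow> xs ! i \<in> A"
  by (auto simp: tuples_def)

lemma tuples_update: "xs \<in> tuples m A \<Longrightarrow> a \<in> A \<Longrightarrow> xs[i := a] \<in> tuples m A"
  by (auto simp: tuples_def dest: set_update_subset_insert[THEN subsetD])

lemma tuples_map: "xs \<in> tuples m A \<Longrightarrow> (\<And>x. x \<in> A \<Longrightarrow> f x \<in> B) \<Longrightarrow> map f xs \<in> tuples m B"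
  by (auto simp: tuples_def)

lemma tuples_map_fst: "xs \<in> tuples m (A \<times> B) \<Longrightarrow> map fst xs \<in> tuples m A"
  by (auto simp: tuples_def)

lemma tuples_tl: "xs \<in> tuples m A \<Longrightarrow> tl xs \<in> tuples (m - 1) A"
  by (cases xs) (auto simp: tuples_def)

lemma tuples_image: "tuples m (f ` A) = map f ` tuples m A"
proof
  show "tuples m (f ` A) \<subseteq> map f ` tuples m A"
  proof
    fix us assume us: "us \<in> tuples m (f ` A)"
    then have "us \<in> lists (f ` A)"
      by (auto simp: tuples_def)
    then have "us \<in> map f ` lists A"
      by (simp only: lists_image)
    with us show "us \<in> map f ` tuples m A"
      by (auto simp: tuples_def lists_eq_set)
  qed
qed (force simp: tuples_def)

lemma ball_tuples_image: "(\<forall>us\<in>tuples m (f ` A). P us) \<longleftrightarrow> (\<forall>xs\<in>tuples m A. P (map f xs))"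
  by (simp add: tuples_image)

lemma homI:
  assumes "\<And>x. x \<in> carrier V \<Longrightarrow> f x \<in> carrier W"
    and "\<And>x y. x \<in> carrier V \<Longrightarrow> y \<in> carrier V \<Longrightarrow> f (add V x y) = add W (f x) (f y)"
    and "\<And>c x. x \<in> carrier V \<Longrightarrow> f (smult V c x) = smult W c (f x)"
    and "\<And>xs. xs \<in> tuples n (carrier V) \<Longrightarrow> f (brk V xs) = brk W (map f xs)"
    and "\<And>x. x \<in> carrier V \<Longrightarrow> f (tw V x) = tw W (f x)"
  shows "hom n V W f"
  using assms unfolding hom_def by blast

lemma homD:
  assumes "hom n V W f"
  shows hom_closed: "\<And>x. x \<in> carrier V \<Longrightarrow> f x \<in> carrier W"
    and hom_add: "\<And>x y. x \<in> carrier V \<Longrightarrow> y \<in> carrier V \<Longrightarrow> f (add V x y) = add W (f x) (f y)"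
    and hom_smult: "\<And>c x. x \<in> carrier V \<Longrightarrow> f (smult V c x) = smult W c (f x)"
    and hom_brk: "\<And>xs. xs \<in> tuples n (carrier V) \<Longrightarrow> f (brk V xs) = brk W (map f xs)"
    and hom_tw: "\<And>x. x \<in> carrier V \<Longrightarrow> f (tw V x) = tw W (f x)"
  using assms unfolding hom_def by blast+

lemma hom_leibniz_nalgD:
  assumes "hom_leibniz_nalg n V"
  shows hom_leibniz_nalg_vspace: "vspace V"
    and brk_closed: "\<And>xs. xs \<in> tuples n (carrier V) \<Longrightarrow> brk V xs \<in> carrier V"
    and brk_update_add: "\<And>xs i a b. xs \<in> tuples n (carrier V) \<Longrightarrow> i < n \<Longrightarrow>
      a \<in> carrier V \<Longrightarrow> b \<in> carrier V \<Longrightarrow>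
      brk V (xs[i := add V a b]) = add V (brk V (xs[i := a])) (brk V (xs[i := b]))"
    and brk_update_smult: "\<And>xs i c a. xs \<in> tuples n (carrier V) \<Longrightarrow> i < n \<Longrightarrow> a \<in> carrier V \<Longrightarrow>
      brk V (xs[i := smult V c a]) = smult V c (brk V (xs[i := a]))"
    and tw_closed: "\<And>x. x \<in> carrier V \<Longrightarrow> tw V x \<in> carrier V"
    and tw_add: "\<And>x y. x \<in> carrier V \<Longrightarrow> y \<in> carrier V \<Longrightarrow> tw V (add V x y) = add V (tw V x) (tw V y)"
    and tw_smult: "\<And>c x. x \<in> carrier V \<Longrightarrow> tw V (smult V c x) = smult V c (tw V x)"
    and tw_brk: "\<And>xs. xs \<in> tuples n (carrier V) \<Longrightarrow> tw V (brk V xs) = brk V (map (tw V) xs)"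
    and hom_leibniz_identity: "\<And>xs ys. xs \<in> tuples n (carrier V) \<Longrightarrow> ys \<in> tuples (n - 1) (carrier V) \<Longrightarrow>
      brk V (brk V xs # map (tw V) ys) =
      lsum V (map (\<lambda>i. brk V ((map (tw V) xs)[i := brk V (xs ! i # ys)])) [0..<n])"
  using assms unfolding hom_leibniz_nalg_def by blast+

lemma hom_zero:
  assumes "vspace V" "vspace W" "hom n V W f"
  shows "f (zero V) = zero W"
  by (metis assms homD(1,3) vspace_smult_zero_left vspace_zero_closed)

lemma hom_lsum:
  assumes "vspace V" "hom n V W f" "f (zero V) = zero W" "set xs \<subseteq> carrier V"
  shows "f (lsum V xs) = lsum W (map f xs)"
  using assms(4) by (induction xs) (simp_all add: assms(1,3) hom_add[OF assms(2)])

lemma hom_comp: "hom n U V f \<Longrightarrow> hom n V W g \<Longrightarrow> hom n U W (g \<circ> f)"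
  by (rule homI) (simp_all add: homD tuples_map)

lemma hom_id: "hom n V V id"
  by (rule homI) simp_all

lemma tw_hom: "hom_leibniz_nalg n V \<Longrightarrow> hom n V V (tw V)"
  by (rule homI) (simp_all add: hom_leibniz_nalgD)

lemma tw_zero: "hom_leibniz_nalg n V \<Longrightarrow> tw V (zero V) = zero V"
  using hom_zero hom_leibniz_nalg_vspace tw_hom by blast

section \<open>Quotient spaces and finitely supported functions\<close>

definition subspace :: "('k::field, 'a) hom_nalg \<Rightarrow> 'a set \<Rightarrow> bool" where
  "subspace V S \<longleftrightarrow> S \<subseteq> carrier V \<and> zero V \<in> S \<and> (\<forall>x\<in>S. \<forall>y\<in>S. add V x y \<in> S) \<and>
     (\<forall>c. \<forall>x\<in>S. smult V c x \<in> S)"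

definition coset :: "('k, 'a) hom_nalg \<Rightarrow> 'a set \<Rightarrow> 'a \<Rightarrow> 'a set" where
  "coset V S x = add V x ` S"

definition quotient_space :: "('k, 'a) hom_nalg \<Rightarrow> 'a set \<Rightarrow> ('k, 'a set) hom_nalg" where
  "quotient_space V S = \<lparr>carrier = coset V S ` carrier V,
     add = \<lambda>A B. {add V a b | a b. a \<in> A \<and> b \<in> B}, zero = S,
     smult = \<lambda>c A. {add V (smult V c a) s | a s. a \<in> A \<and> s \<in> S},
     brk = \<lambda>_. S, tw = \<lambda>A. A\<rparr>"

definition quotient_map :: "('k, 'a) hom_nalg \<Rightarrow> 'a set \<Rightarrow> ('a \<Rightarrow> 'a) \<Rightarrow> 'a set \<Rightarrow> 'a set" where
  "quotient_map V S f A = {add V (f a) s | a s. a \<in> A \<and> s \<in> S}"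

lemma quotient_space_simps [simp]:
  "carrier (quotient_space V S) = coset V S ` carrier V"
  "zero (quotient_space V S) = S"
  "add (quotient_space V S) A B = {add V a b | a b. a \<in> A \<and> b \<in> B}"
  "smult (quotient_space V S) c A = {add V (smult V c a) s | a s. a \<in> A \<and> s \<in> S}"
  by (simp_all add: quotient_space_def)

context
  fixes V :: "('k::field, 'a) hom_nalg" and S :: "'a set"
  assumes V: "vspace V" and S: "subspace V S"
begin

lemma subspace_subset: "s \<in> S \<Longrightarrow> s \<in> carrier V"
  and subspace_zero: "zero V \<in> S"
  and subspace_add: "s \<in> S \<Longrightarrow> t \<in> S \<Longrightarrow> add V s t \<in> S"
  and subspace_smult: "s \<in> S \<Longrightarrow> smult V c s \<in> S"
  using S unfolding subspace_def by blast+

lemma coset_zero: "coset V S (zero V) = S"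
  using subspace_subset V by (force simp: coset_def)

lemma coset_self: "x \<in> carrier V \<Longrightarrow> x \<in> coset V S x"
  unfolding coset_def using V subspace_zero by (auto intro: image_eqI[of _ _ "zero V"])

lemma coset_add_absorb:
  assumes x: "x \<in> carrier V" and s: "s \<in> S"
  shows "coset V S (add V x s) = coset V S x"
proof (rule set_eqI)
  have s_carrier: "s \<in> carrier V" by (rule subspace_subset[OF s])
  fix z
  show "z \<in> coset V S (add V x s) \<longleftrightarrow> z \<in> coset V S x"
  proof
    assume "z \<in> coset V S (add V x s)"
    then obtain t where t: "t \<in> S" "z = add V (add V x s) t" by (auto simp: coset_def)
    then have "z = add V x (add V s t)"
      using x s_carrier subspace_subset V by (simp add: vspace_add_assoc)
    then show "z \<in> coset V S x"
      unfolding coset_def using subspace_add[OF s t(1)] by blast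
  next
    assume "z \<in> coset V S x"
    then obtain t where t: "t \<in> S" "z = add V x t" by (auto simp: coset_def)
    have t_carrier: "t \<in> carrier V" by (rule subspace_subset[OF t(1)])
    have "add V s (add V (smult V (-1) s) t) = t"
      using s_carrier t_carrier V by (simp flip: vspace_add_assoc)
    then have "z = add V (add V x s) (add V (smult V (-1) s) t)"
      using x s_carrier t_carrier V t(2) by (simp add: vspace_add_assoc)
    then show "z \<in> coset V S (add V x s)"
      unfolding coset_def using subspace_add[OF subspace_smult[OF s] t(1)] by blast
  qed
qed

lemma coset_eq_iff:
  assumes "x \<in> carrier V" "y \<in> carrier V"
  shows "coset V S x = coset V S y \<longleftrightarrow> (\<exists>s\<in>S. x = add V y s)"
proof
  assume "coset V S x = coset V S y"
  then show "\<exists>s\<in>S. x = add V y s"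
    using coset_self[OF assms(1)] unfolding coset_def by auto
qed (use assms coset_add_absorb in auto)

lemma coset_eq_zero_iff: "x \<in> carrier V \<Longrightarrow> coset V S x = S \<longleftrightarrow> x \<in> S"
  using coset_eq_iff[of x "zero V"] coset_zero V subspace_subset by auto

lemma coset_add:
  assumes x: "x \<in> carrier V" and y: "y \<in> carrier V"
  shows "add (quotient_space V S) (coset V S x) (coset V S y) = coset V S (add V x y)"
proof (rule set_eqI)
  fix z
  show "z \<in> add (quotient_space V S) (coset V S x) (coset V S y) \<longleftrightarrow> z \<in> coset V S (add V x y)"
  proof
    assume "z \<in> add (quotient_space V S) (coset V S x) (coset V S y)"
    then obtain s t where st: "s \<in> S" "t \<in> S" "z = add V (add V x s) (add V y t)"
      by (auto simp: coset_def)
    then have "z = add V (add V x y) (add V s t)"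
      using x y subspace_subset V by (simp add: vspace_add_assoc vspace_add_left_commute)
    then show "z \<in> coset V S (add V x y)"
      unfolding coset_def using subspace_add[OF st(1,2)] by blast
  next
    assume "z \<in> coset V S (add V x y)"
    then obtain s where s: "s \<in> S" "z = add V (add V x y) s" by (auto simp: coset_def)
    then have "z = add V (add V x s) (add V y (zero V))"
      using x y subspace_subset V
      by (simp add: vspace_add_assoc vspace_add_commute vspace_add_left_commute)
    then show "z \<in> add (quotient_space V S) (coset V S x) (coset V S y)"
      unfolding coset_def using s(1) subspace_zero by auto
  qed
qed

lemma coset_smult:
  assumes x: "x \<in> carrier V"
  shows "smult (quotient_space V S) c (coset V S x) = coset V S (smult V c x)"
proof (rule set_eqI)
  fix z
  show "z \<in> smult (quotient_space V S) c (coset V S x) \<longleftrightarrow> z \<in> coset V S (smult V c x)"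
  proof
    assume "z \<in> smult (quotient_space V S) c (coset V S x)"
    then obtain s t where st: "s \<in> S" "t \<in> S" "z = add V (smult V c (add V x s)) t"
      by (auto simp: coset_def)
    then have "z = add V (smult V c x) (add V (smult V c s) t)"
      using x subspace_subset V by (simp add: vspace_add_assoc vspace_smult_add_right)
    then show "z \<in> coset V S (smult V c x)"
      unfolding coset_def using subspace_add[OF subspace_smult[OF st(1)] st(2)] by blast
  next
    assume "z \<in> coset V S (smult V c x)"
    then obtain s where s: "s \<in> S" "z = add V (smult V c x) s" by (auto simp: coset_def)
    then have "z = add V (smult V c (add V x (zero V))) s"
      using x V by simp
    then show "z \<in> smult (quotient_space V S) c (coset V S x)"
      unfolding coset_def using s(1) subspace_zero by auto
  qed
qed

lemma coset_map:
  assumes f: "\<And>x. x \<in> carrier V \<Longrightarrow> f x \<in> carrier V"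
    "\<And>x y. x \<in> carrier V \<Longrightarrow> y \<in> carrier V \<Longrightarrow> f (add V x y) = add V (f x) (f y)"
    "\<And>s. s \<in> S \<Longrightarrow> f s \<in> S"
    and x: "x \<in> carrier V"
  shows "quotient_map V S f (coset V S x) = coset V S (f x)"
proof (rule set_eqI)
  fix z
  show "z \<in> quotient_map V S f (coset V S x) \<longleftrightarrow> z \<in> coset V S (f x)"
  proof
    assume "z \<in> quotient_map V S f (coset V S x)"
    then obtain s t where st: "s \<in> S" "t \<in> S" "z = add V (f (add V x s)) t"
      by (auto simp: coset_def quotient_map_def)
    then have "z = add V (f x) (add V (f s) t)"
      using x f subspace_subset V by (simp add: vspace_add_assoc)
    then show "z \<in> coset V S (f x)"
      unfolding coset_def using subspace_add[OF f(3)[OF st(1)] st(2)] by blast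
  next
    assume "z \<in> coset V S (f x)"
    then obtain s where s: "s \<in> S" "z = add V (f x) s" by (auto simp: coset_def)
    then have "z = add V (f (add V x (zero V))) s"
      using x V by simp
    then show "z \<in> quotient_map V S f (coset V S x)"
      unfolding coset_def quotient_map_def using s(1) subspace_zero by auto
  qed
qed

lemma quotient_map_add_smult:
  assumes f: "\<And>x. x \<in> carrier V \<Longrightarrow> f x \<in> carrier V"
    "\<And>x y. x \<in> carrier V \<Longrightarrow> y \<in> carrier V \<Longrightarrow> f (add V x y) = add V (f x) (f y)"
    "\<And>c x. x \<in> carrier V \<Longrightarrow> f (smult V c x) = smult V c (f x)"
    "\<And>s. s \<in> S \<Longrightarrow> f s \<in> S"
    and A: "A \<in> carrier (quotient_space V S)" and B: "B \<in> carrier (quotient_space V S)"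
  shows "quotient_map V S f (add (quotient_space V S) A B) =
      add (quotient_space V S) (quotient_map V S f A) (quotient_map V S f B)"
    and "quotient_map V S f (smult (quotient_space V S) c A) =
      smult (quotient_space V S) c (quotient_map V S f A)"
  using A B by (auto simp: coset_add coset_smult coset_map f V simp del: quotient_space_simps(3,4))

lemma vspace_quotient_space: "vspace (quotient_space V S)"
proof -
  have "S \<in> coset V S ` carrier V"
    using coset_zero V by (metis image_eqI vspace_zero_closed)
  moreover have "add (quotient_space V S) S (coset V S x) = coset V S x" if "x \<in> carrier V" for x
    using coset_add[of "zero V" x] coset_zero that V by (metis vspace_zero_add vspace_zero_closed)
  moreover have "\<exists>y\<in>carrier V. coset V S (add V x y) = S" if "x \<in> carrier V" for x
    using coset_zero that V vspace_add_neg[OF V that] by (metis vspace_smult_closed)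
  ultimately show ?thesis
    unfolding vspace_def quotient_space_simps(1,2)
    by (simp add: coset_add coset_smult V vspace_add_assoc vspace_add_commute vspace_add_left_commute
        vspace_smult_add_right vspace_smult_add_left vspace_smult_smult del: quotient_space_simps)
qed

end

definition supp :: "('x \<Rightarrow> 'k::field) \<Rightarrow> 'x set" where
  "supp g = {t. g t \<noteq> 0}"

definition fun_space :: "('k::field, 'x \<Rightarrow> 'k) hom_nalg" where
  "fun_space = \<lparr>carrier = {g. finite (supp g)}, add = \<lambda>f g t. f t + g t, zero = \<lambda>_. 0,
     smult = \<lambda>c f t. c * f t, brk = \<lambda>_ _. 0, tw = id\<rparr>"

lemma fun_space_simps [simp]:
  "carrier fun_space = {g. finite (supp g)}"
  "add fun_space f g = (\<lambda>t. f t + g t)"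
  "zero fun_space = (\<lambda>_. 0)"
  "smult fun_space c f = (\<lambda>t. c * f t)"
  by (simp_all add: fun_space_def)

lemma supp_zero [simp]: "supp (\<lambda>_. 0) = {}"
  by (simp add: supp_def)

lemma finite_supp_add: "finite (supp f) \<Longrightarrow> finite (supp g) \<Longrightarrow> finite (supp (\<lambda>t. f t + g t))"
  by (rule finite_subset[of _ "supp f \<union> supp g"]) (auto simp: supp_def)

lemma finite_supp_smult: "finite (supp f) \<Longrightarrow> finite (supp (\<lambda>t. c * f t))"
  by (rule finite_subset[of _ "supp f"]) (auto simp: supp_def)

lemma finite_supp_diff: "finite (supp f) \<Longrightarrow> finite (supp g) \<Longrightarrow> finite (supp (\<lambda>t. f t - g t))"
  by (rule finite_subset[of _ "supp f \<union> supp g"]) (auto simp: supp_def)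

lemma finite_supp_sum:
  "finite I \<Longrightarrow> (\<And>i. i \<in> I \<Longrightarrow> finite (supp (g i))) \<Longrightarrow> finite (supp (\<lambda>t. \<Sum>i\<in>I. g i t))"
  by (induction I rule: finite_induct) (simp_all add: finite_supp_add)

lemma finite_supp_sum_list:
  "(\<And>i. i \<in> set is \<Longrightarrow> finite (supp (g i))) \<Longrightarrow> finite (supp (\<lambda>t. \<Sum>i\<leftarrow>is. g i t))"
  by (induction "is") (simp_all add: finite_supp_add)

lemma supp_ind: "supp (ind t :: 'x \<Rightarrow> 'k::field) = {t}"
  by (auto simp: supp_def ind_def)

lemma finite_supp_ind [simp]: "finite (supp (ind t :: 'x \<Rightarrow> 'k::field))"
  by (simp add: supp_ind)

lemma ind_eq_iff [simp]: "(ind s :: 'x \<Rightarrow> 'k::field) = ind t \<longleftrightarrow> s = t"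
  by (metis ind_def one_neq_zero)

lemma vspace_fun_space: "vspace (fun_space :: ('k::field, 'x \<Rightarrow> 'k) hom_nalg)"
proof -
  have "\<exists>h. finite (supp h) \<and> (\<lambda>t. g t + h t) = (\<lambda>_. 0)" if "finite (supp g)" for g :: "'x \<Rightarrow> 'k"
    using finite_supp_smult[OF that, of "-1"] by (intro exI[of _ "\<lambda>t. - g t"]) simp
  then show ?thesis
    unfolding vspace_def fun_space_simps
    by (auto simp: finite_supp_add finite_supp_smult algebra_simps)
qed

lemma finite_supp_fspan:
  assumes "\<And>g. g \<in> G \<Longrightarrow> finite (supp g)" and "f \<in> fspan G"
  shows "finite (supp f)"
  using assms(2) by induction (simp_all add: assms(1) finite_supp_add finite_supp_smult)

lemma subspace_fspan: "(\<And>g. g \<in> G \<Longrightarrow> finite (supp g)) \<Longrightarrow> subspace fun_space (fspan G)"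
  unfolding subspace_def using finite_supp_fspan by (auto intro: fspan.intros)

lemma fspan_diff: "f \<in> fspan G \<Longrightarrow> g \<in> fspan G \<Longrightarrow> (\<lambda>t. f t - g t) \<in> fspan G"
  using fspan.add[of f G "\<lambda>t. (-1) * g t"] fspan.smult[of g G "-1"] by simp

lemma fspan_sum:
  "finite I \<Longrightarrow> (\<And>i. i \<in> I \<Longrightarrow> f i \<in> fspan G) \<Longrightarrow> (\<lambda>t. \<Sum>i\<in>I. f i t) \<in> fspan G"
  by (induction I rule: finite_induct) (simp_all add: fspan.zero fspan.add)

definition pushforward :: "('x \<Rightarrow> 'y) \<Rightarrow> ('x \<Rightarrow> 'k::comm_ring_1) \<Rightarrow> 'y \<Rightarrow> 'k" where
  "pushforward f g = (\<lambda>s. \<Sum>t\<in>{t. g t \<noteq> 0 \<and> f t = s}. g t)"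

lemma pushforward_eq_sum:
  assumes "finite A" "supp g \<subseteq> A"
  shows "pushforward f g s = (\<Sum>t\<in>{t\<in>A. f t = s}. g t)"
  unfolding pushforward_def
  by (rule sum.mono_neutral_left) (use assms in \<open>auto simp: supp_def\<close>)

lemma pushforward_add:
  assumes "finite (supp g)" "finite (supp h)"
  shows "pushforward f (\<lambda>t. g t + h t) = (\<lambda>s. pushforward f g s + pushforward f h s)"
proof
  fix s
  let ?A = "supp g \<union> supp h"
  have "supp (\<lambda>t. g t + h t) \<subseteq> ?A" by (auto simp: supp_def)
  then show "pushforward f (\<lambda>t. g t + h t) s = pushforward f g s + pushforward f h s"
    using assms by (simp add: pushforward_eq_sum[of ?A] sum.distrib)
qed

lemma pushforward_smult:
  assumes "finite (supp g)"
  shows "pushforward f (\<lambda>t. c * g t) = (\<lambda>s. c * pushforward f g s)"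
proof
  fix s
  have "supp (\<lambda>t. c * g t) \<subseteq> supp g" by (auto simp: supp_def)
  then show "pushforward f (\<lambda>t. c * g t) s = c * pushforward f g s"
    using assms by (simp add: pushforward_eq_sum[of "supp g"] sum_distrib_left)
qed

lemma pushforward_diff:
  assumes "finite (supp g)" "finite (supp h)"
  shows "pushforward f (\<lambda>t. g t - h t) = (\<lambda>s. pushforward f g s - pushforward f h s)"
  using pushforward_add[OF assms(1) finite_supp_smult[OF assms(2)], of f "-1"]
    pushforward_smult[OF assms(2), of f "-1"] by simp

lemma pushforward_sum:
  "finite I \<Longrightarrow> (\<And>i. i \<in> I \<Longrightarrow> finite (supp (g i))) \<Longrightarrow>
   pushforward f (\<lambda>t. \<Sum>i\<in>I. g i t) = (\<lambda>s. \<Sum>i\<in>I. pushforward f (g i) s)"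
proof (induction I rule: finite_induct)
  case (insert x F)
  then show ?case
    by (simp add: pushforward_add finite_supp_sum)
qed (simp add: pushforward_def)

lemma pushforward_ind: "pushforward f (ind t) = ind (f t)"
proof
  fix s
  have "pushforward f (ind t) s = (\<Sum>u\<in>{u\<in>{t}. f u = s}. ind t u)"
    by (rule pushforward_eq_sum) (simp_all add: supp_ind)
  also have "\<dots> = ind (f t) s"
  proof (cases "f t = s")
    case True
    then have fibre: "{u\<in>{t}. f u = s} = {t}" by auto
    show ?thesis unfolding fibre ind_def using True by simp
  next
    case False
    then have fibre: "{u\<in>{t}. f u = s} = {}" by auto
    show ?thesis unfolding fibre ind_def using False by simp
  qed
  finally show "pushforward f (ind t) s = ind (f t) s" .
qed

lemma finite_supp_pushforward: "finite (supp g) \<Longrightarrow> finite (supp (pushforward f g))"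
proof (rule finite_subset[of _ "f ` supp g"])
  show "supp (pushforward f g) \<subseteq> f ` supp g"
    unfolding supp_def pushforward_def using sum.not_neutral_contains_not_neutral by fastforce
qed simp

lemma formal_Nil [simp]: "formal [] = (\<lambda>_. 0)"
  and formal_Cons [simp]: "formal ((c, t) # ps) = (\<lambda>s. c * ind t s + formal ps s)"
  by (simp_all add: formal_def)

lemma formal_append: "formal (ps @ qs) = (\<lambda>s. formal ps s + formal qs s)"
  by (simp add: formal_def)

lemma finite_supp_formal [simp]: "finite (supp (formal ps))"
  by (induction ps) (auto simp: finite_supp_add finite_supp_smult)

lemma formal_scale: "formal (map (\<lambda>(c, t). (a * c, t)) ps) = (\<lambda>s. a * formal ps s)"
  by (induction ps) (auto simp: algebra_simps)

lemma delta1_Nil [simp]: "delta1 K [] = zero K"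
  and delta1_Cons [simp]: "delta1 K ((c, t) # ps) = add K (smult K c (brk K t)) (delta1 K ps)"
  by (simp_all add: delta1_def)

lemma pushforward_formal: "pushforward f (formal ps) = formal (map (\<lambda>(c, t). (c, f t)) ps)"
proof (induction ps)
  case (Cons p ps)
  then show ?case
    by (cases p) (simp add: pushforward_add pushforward_smult pushforward_ind finite_supp_smult)
qed (simp add: pushforward_def)

section \<open>Extensions carried by pairs\<close>

text \<open>Both auxiliary extensions of the proof have this form: K \<times> K/[K,\<dots>,K] with \<beta> = 0, and
  the pairs (\<delta>1 t, [t]) with \<beta> xs = [x1 \<otimes> \<dots> \<otimes> xn].\<close>

definition pair_alg :: "('k, 'a) hom_nalg \<Rightarrow> ('k, 'w) hom_nalg \<Rightarrow> ('a \<times> 'w) set \<Rightarrow>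
    ('a list \<Rightarrow> 'w) \<Rightarrow> ('w \<Rightarrow> 'w) \<Rightarrow> ('k, 'a \<times> 'w) hom_nalg" where
  "pair_alg K W C \<beta> \<tau> = \<lparr>carrier = C,
     add = \<lambda>x y. (add K (fst x) (fst y), add W (snd x) (snd y)), zero = (zero K, zero W),
     smult = \<lambda>c x. (smult K c (fst x), smult W c (snd x)),
     brk = \<lambda>xs. (brk K (map fst xs), \<beta> (map fst xs)),
     tw = \<lambda>x. (tw K (fst x), \<tau> (snd x))\<rparr>"

lemma pair_alg_simps [simp]:
  "carrier (pair_alg K W C \<beta> \<tau>) = C"
  "add (pair_alg K W C \<beta> \<tau>) x y = (add K (fst x) (fst y), add W (snd x) (snd y))"
  "zero (pair_alg K W C \<beta> \<tau>) = (zero K, zero W)"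
  "smult (pair_alg K W C \<beta> \<tau>) c x = (smult K c (fst x), smult W c (snd x))"
  "brk (pair_alg K W C \<beta> \<tau>) xs = (brk K (map fst xs), \<beta> (map fst xs))"
  "tw (pair_alg K W C \<beta> \<tau>) x = (tw K (fst x), \<tau> (snd x))"
  by (simp_all add: pair_alg_def)

lemma lsum_pair_alg: "lsum (pair_alg K W C \<beta> \<tau>) xs = (lsum K (map fst xs), lsum W (map snd xs))"
  by (induction xs) simp_all

locale pair_extension =
  fixes n :: nat and K :: "('k::field, 'a) hom_nalg" and W :: "('k, 'w) hom_nalg"
    and C :: "('a \<times> 'w) set" and \<beta> :: "'a list \<Rightarrow> 'w" and \<tau> :: "'w \<Rightarrow> 'w"
  assumes K: "hom_leibniz_nalg n K" and W: "vspace W"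
    and C_subset: "C \<subseteq> carrier K \<times> carrier W"
    and zero_mem: "(zero K, zero W) \<in> C"
    and add_mem: "\<And>x y. x \<in> C \<Longrightarrow> y \<in> C \<Longrightarrow> (add K (fst x) (fst y), add W (snd x) (snd y)) \<in> C"
    and smult_mem: "\<And>c x. x \<in> C \<Longrightarrow> (smult K c (fst x), smult W c (snd x)) \<in> C"
    and tw_mem: "\<And>x. x \<in> C \<Longrightarrow> (tw K (fst x), \<tau> (snd x)) \<in> C"
    and brk_mem: "\<And>xs. xs \<in> tuples n C \<Longrightarrow> (brk K (map fst xs), \<beta> (map fst xs)) \<in> C"
    and \<beta>_add: "\<And>xs i a b. xs \<in> tuples n (carrier K) \<Longrightarrow> i < n \<Longrightarrow> a \<in> carrier K \<Longrightarrow>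
      b \<in> carrier K \<Longrightarrow> \<beta> (xs[i := add K a b]) = add W (\<beta> (xs[i := a])) (\<beta> (xs[i := b]))"
    and \<beta>_smult: "\<And>xs i c a. xs \<in> tuples n (carrier K) \<Longrightarrow> i < n \<Longrightarrow> a \<in> carrier K \<Longrightarrow>
      \<beta> (xs[i := smult K c a]) = smult W c (\<beta> (xs[i := a]))"
    and \<tau>_add: "\<And>x y. x \<in> carrier W \<Longrightarrow> y \<in> carrier W \<Longrightarrow> \<tau> (add W x y) = add W (\<tau> x) (\<tau> y)"
    and \<tau>_smult: "\<And>c x. x \<in> carrier W \<Longrightarrow> \<tau> (smult W c x) = smult W c (\<tau> x)"
    and \<tau>_\<beta>: "\<And>xs. xs \<in> tuples n (carrier K) \<Longrightarrow> \<tau> (\<beta> xs) = \<beta> (map (tw K) xs)"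
    and \<beta>_leibniz: "\<And>xs ys. xs \<in> tuples n (carrier K) \<Longrightarrow> ys \<in> tuples (n - 1) (carrier K) \<Longrightarrow>
      \<beta> (brk K xs # map (tw K) ys) = lsum W (map (\<lambda>i. \<beta> ((map (tw K) xs)[i := brk K (xs ! i # ys)])) [0..<n])"
begin

abbreviation "P \<equiv> pair_alg K W C \<beta> \<tau>"

lemma fst_mem: "x \<in> C \<Longrightarrow> fst x \<in> carrier K"
  and snd_mem: "x \<in> C \<Longrightarrow> snd x \<in> carrier W"
  using C_subset by auto

lemma map_fst_tuples: "xs \<in> tuples m C \<Longrightarrow> map fst xs \<in> tuples m (carrier K)"
  using tuples_map fst_mem by blast

lemma vspace_pair_alg: "vspace P"
proof -
  have VK: "vspace K" by (rule hom_leibniz_nalg_vspace[OF K])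
  have inverse: "\<exists>y\<in>C. (add K (fst x) (fst y), add W (snd x) (snd y)) = (zero K, zero W)" if "x \<in> C" for x
    using smult_mem[OF that, of "-1"] that VK W
    by (intro bexI[of _ "(smult K (-1) (fst x), smult W (-1) (snd x))"]) (auto simp: fst_mem snd_mem)
  show ?thesis
    unfolding vspace_def pair_alg_simps
    using VK W zero_mem add_mem smult_mem inverse
    by (auto simp: fst_mem snd_mem vspace_add_assoc vspace_add_commute[of K] vspace_add_commute[of W]
        vspace_smult_add_right vspace_smult_add_left vspace_smult_smult)
qed

lemma hom_leibniz_nalg_pair_alg: "hom_leibniz_nalg n P"
  unfolding hom_leibniz_nalg_def pair_alg_simps(1)
proof (intro conjI ballI allI impI)
  fix xs ys assume xs: "xs \<in> tuples n C" and ys: "ys \<in> tuples (n - 1) C"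
  let ?xs = "map fst xs" and ?ys = "map fst ys"
  let ?L = "\<lambda>i. (map (tw K) ?xs)[i := brk K (?xs ! i # ?ys)]"
  have terms: "map (\<lambda>i. brk P ((map (tw P) xs)[i := brk P (xs ! i # ys)])) [0..<n] =
      map (\<lambda>i. (brk K (?L i), \<beta> (?L i))) [0..<n]"
    using tuples_length[OF xs] by (auto simp: map_update comp_def)
  have "brk P (brk P xs # map (tw P) ys) =
      (brk K (brk K ?xs # map (tw K) ?ys), \<beta> (brk K ?xs # map (tw K) ?ys))"
    by (simp add: comp_def)
  also have "\<dots> = (lsum K (map (\<lambda>i. brk K (?L i)) [0..<n]), lsum W (map (\<lambda>i. \<beta> (?L i)) [0..<n]))"
    by (simp only: hom_leibniz_identity[OF K map_fst_tuples[OF xs] map_fst_tuples[OF ys]]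
        \<beta>_leibniz[OF map_fst_tuples[OF xs] map_fst_tuples[OF ys]])
  also have "\<dots> = lsum P (map (\<lambda>i. (brk K (?L i), \<beta> (?L i))) [0..<n])"
    by (simp add: lsum_pair_alg comp_def)
  finally show "brk P (brk P xs # map (tw P) ys) =
      lsum P (map (\<lambda>i. brk P ((map (tw P) xs)[i := brk P (xs ! i # ys)])) [0..<n])"
    by (simp only: terms)
qed (use vspace_pair_alg brk_mem tw_mem map_fst_tuples fst_mem snd_mem tuples_update hom_leibniz_nalgD[OF K]
       \<beta>_add \<beta>_smult \<tau>_add \<tau>_smult \<tau>_\<beta> in \<open>auto simp: map_update comp_def\<close>)

lemma hom_fst: "hom n P K fst"
  by (rule homI) (simp_all add: fst_mem map_fst_tuples)

lemma hom_graph: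
  assumes "\<And>x. x \<in> carrier K \<Longrightarrow> (x, \<phi> x) \<in> C"
    and "\<And>x y. x \<in> carrier K \<Longrightarrow> y \<in> carrier K \<Longrightarrow> \<phi> (add K x y) = add W (\<phi> x) (\<phi> y)"
    and "\<And>c x. x \<in> carrier K \<Longrightarrow> \<phi> (smult K c x) = smult W c (\<phi> x)"
    and "\<And>xs. xs \<in> tuples n (carrier K) \<Longrightarrow> \<phi> (brk K xs) = \<beta> xs"
    and "\<And>x. x \<in> carrier K \<Longrightarrow> \<phi> (tw K x) = \<tau> (\<phi> x)"
  shows "hom n K P (\<lambda>x. (x, \<phi> x))"
  by (rule homI) (simp_all add: assms comp_def)

lemma alpha_central_extension_pair_alg:
  assumes ace: "alpha_central_extension n K L \<pi>"
    and onto: "\<And>x. x \<in> carrier K \<Longrightarrow> \<exists>w. (x, w) \<in> C"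
    and \<beta>_vanishes: "\<And>xs i. length xs = n \<Longrightarrow> i < n \<Longrightarrow> xs ! i \<in> carrier K \<Longrightarrow>
      \<forall>j<n. j \<noteq> i \<longrightarrow> xs ! j \<in> tw K ` kernel K L \<pi> \<Longrightarrow> \<beta> xs = zero W"
  shows "alpha_central_extension n P L (\<pi> \<circ> fst)"
proof -
  have L: "hom_leibniz_nalg n L" and \<pi>: "hom n K L \<pi>" and \<pi>_onto: "\<pi> ` carrier K = carrier L"
    and brk_vanishes: "\<And>xs i. length xs = n \<Longrightarrow> i < n \<Longrightarrow> xs ! i \<in> carrier K \<Longrightarrow>
      \<forall>j<n. j \<noteq> i \<longrightarrow> xs ! j \<in> tw K ` kernel K L \<pi> \<Longrightarrow> brk K xs = zero K"
    using ace unfolding alpha_central_extension_def extension_def by blast+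
  have "(\<pi> \<circ> fst) ` C = carrier L"
  proof
    show "(\<pi> \<circ> fst) ` C \<subseteq> carrier L"
      using hom_closed[OF \<pi>] fst_mem by auto
    show "carrier L \<subseteq> (\<pi> \<circ> fst) ` C"
    proof
      fix l assume "l \<in> carrier L"
      then obtain x w where "l = \<pi> x" "(x, w) \<in> C"
        using \<pi>_onto onto by blast
      then show "l \<in> (\<pi> \<circ> fst) ` C" by force
    qed
  qed
  moreover have "brk P xs = zero P"
    if xs: "length xs = n" "i < n" "xs ! i \<in> C"
      "\<forall>j<n. j \<noteq> i \<longrightarrow> xs ! j \<in> tw P ` kernel P L (\<pi> \<circ> fst)" for xs i
  proof -
    have "\<forall>j<n. j \<noteq> i \<longrightarrow> map fst xs ! j \<in> tw K ` kernel K L \<pi>"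
      using xs(1,4) fst_mem by (auto simp: kernel_def)
    moreover have "length (map fst xs) = n" "map fst xs ! i \<in> carrier K"
      using xs(1-3) fst_mem by simp_all
    ultimately show ?thesis
      using brk_vanishes \<beta>_vanishes xs(2) by simp
  qed
  ultimately show ?thesis
    using hom_leibniz_nalg_pair_alg L hom_comp[OF hom_fst \<pi>]
    unfolding alpha_central_extension_def extension_def pair_alg_simps(1)
    by (intro conjI allI impI) (auto simp del: pair_alg_simps)
qed

end

section \<open>Central, \<alpha>-central and universal extensions\<close>

lemma kernel_tw_closed:
  assumes "extension n K L \<pi>" and "x \<in> kernel K L \<pi>"
  shows "tw K x \<in> kernel K L \<pi>"
proof -
  have K: "hom_leibniz_nalg n K" and L: "hom_leibniz_nalg n L" and \<pi>: "hom n K L \<pi>"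
    using assms(1) unfolding extension_def by blast+
  then show ?thesis
    using assms(2) by (simp add: kernel_def tw_closed hom_tw[OF \<pi>] tw_zero)
qed

lemma brk_center_zero:
  assumes "xs \<in> tuples n (carrier K)" "j < n" "xs ! j \<in> center n K"
  shows "brk K xs = zero K"
proof -
  have "brk K (xs[j := xs ! j]) = zero K"
    using assms unfolding center_def by blast
  then show ?thesis by simp
qed

lemma alpha_central_tuple_tuples:
  assumes "hom_leibniz_nalg n K" "length xs = n" "xs ! i \<in> carrier K"
    "\<forall>j<n. j \<noteq> i \<longrightarrow> xs ! j \<in> tw K ` kernel K L \<pi>"
  shows "xs \<in> tuples n (carrier K)"
proof (rule tuplesI[OF assms(2)], rule subsetI)
  fix x assume "x \<in> set xs"
  then obtain k where "k < n" "x = xs ! k"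
    using assms(2) by (auto simp: in_set_conv_nth)
  then show "x \<in> carrier K"
    using assms(3,4) tw_closed[OF assms(1)] by (cases "k = i") (auto simp: kernel_def)
qed

lemma central_imp_alpha_central_extension:
  assumes "2 \<le> n" and central: "central_extension n K L \<pi>"
  shows "alpha_central_extension n K L \<pi>"
proof -
  have ext: "extension n K L \<pi>" and M: "kernel K L \<pi> \<subseteq> center n K"
    using central unfolding central_extension_def by blast+
  have K: "hom_leibniz_nalg n K"
    using ext unfolding extension_def by blast
  have "brk K xs = zero K"
    if xs: "length xs = n" "i < n" "xs ! i \<in> carrier K" "\<forall>j<n. j \<noteq> i \<longrightarrow> xs ! j \<in> tw K ` kernel K L \<pi>"
    for xs i
  proof -
    define j where "j = (if i = 0 then 1 else 0 :: nat)"
    have j: "j < n" "j \<noteq> i" using \<open>2 \<le> n\<close> by (auto simp: j_def)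
    then obtain m where "m \<in> kernel K L \<pi>" "xs ! j = tw K m"
      using xs(4) by blast
    then have "xs ! j \<in> center n K"
      using M kernel_tw_closed[OF ext] by auto
    then show ?thesis
      by (rule brk_center_zero[OF alpha_central_tuple_tuples[OF K xs(1,3,4)] j(1)])
  qed
  with ext show ?thesis
    unfolding alpha_central_extension_def by blast
qed

lemma alpha_central_tuple_twisted:
  assumes K: "hom_leibniz_nalg n K" and M: "kernel K L \<pi> \<subseteq> center n K"
    and xs: "length xs = n" "i < n" "\<forall>j<n. j \<noteq> i \<longrightarrow> xs ! j \<in> tw K ` kernel K L \<pi>"
  obtains ms where "ms \<in> tuples n (carrier K)" "\<forall>j<n. j \<noteq> i \<longrightarrow> ms ! j \<in> center n K"
    "\<And>y. xs[i := y] = (map (tw K) ms)[i := y]"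
proof -
  have "\<forall>j. \<exists>k. j < n \<longrightarrow> j \<noteq> i \<longrightarrow> k \<in> kernel K L \<pi> \<and> xs ! j = tw K k"
    using xs(3) by blast
  then obtain m where m: "\<And>j. j < n \<Longrightarrow> j \<noteq> i \<Longrightarrow> m j \<in> kernel K L \<pi> \<and> xs ! j = tw K (m j)"
    by metis
  define ms where "ms = (map m [0..<n])[i := zero K]"
  have "ms \<in> tuples n (carrier K)"
  proof (rule tuplesI)
    show length_ms: "length ms = n" by (simp add: ms_def)
    have "ms ! j \<in> carrier K" if "j < n" for j
      using m that hom_leibniz_nalg_vspace[OF K] by (cases "j = i") (auto simp: ms_def kernel_def)
    then show "set ms \<subseteq> carrier K"
      by (auto simp: in_set_conv_nth length_ms)
  qed
  moreover have "\<forall>j<n. j \<noteq> i \<longrightarrow> ms ! j \<in> center n K"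
    using m M by (auto simp: ms_def)
  moreover have "xs[i := y] = (map (tw K) ms)[i := y]" for y
  proof (rule nth_equalityI)
    show "length (xs[i := y]) = length ((map (tw K) ms)[i := y])"
      using xs(1) by (simp add: ms_def)
    show "xs[i := y] ! j = (map (tw K) ms)[i := y] ! j" if "j < length (xs[i := y])" for j
      using that m[of j] xs(1,2) by (cases "j = i") (simp_all add: ms_def)
  qed
  ultimately show ?thesis using that by blast
qed

definition hom_iso :: "nat \<Rightarrow> ('k::field, 'a) hom_nalg \<Rightarrow> ('k, 'b) hom_nalg \<Rightarrow> ('a \<Rightarrow> 'b) \<Rightarrow> bool" where
  "hom_iso n V W f \<longleftrightarrow> hom n V W f \<and> bij_betw f (carrier V) (carrier W) \<and> f (zero V) = zero W"

lemma hom_isoD: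
  assumes "hom_iso n V W f"
  shows "hom n V W f" "inj_on f (carrier V)" "carrier W = f ` carrier V" "zero W = f (zero V)"
  using assms unfolding hom_iso_def bij_betw_def by auto

lemma vspace_hom_iso:
  assumes V: "vspace V" and f: "hom_iso n V W f"
  shows "vspace W"
proof -
  note iso = hom_isoD[OF f]
  have eq: "\<And>x y. x \<in> carrier V \<Longrightarrow> y \<in> carrier V \<Longrightarrow> f x = f y \<longleftrightarrow> x = y"
    using iso(2) by (simp add: inj_on_eq_iff)
  show ?thesis
    unfolding vspace_def iso(3)
    by (safe; simp add: iso(4) eq V vspace_add_assoc vspace_add_commute vspace_add_left_commute
        vspace_add_inverse vspace_smult_add_right vspace_smult_add_left vspace_smult_smult
        flip: homD(2,3)[OF iso(1)])
qed

lemma hom_leibniz_identity_hom_iso: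
  assumes "0 < n" and V: "hom_leibniz_nalg n V" and f: "hom_iso n V W f"
    and xs: "xs \<in> tuples n (carrier V)" and ys: "ys \<in> tuples (n - 1) (carrier V)"
  shows "brk W (brk W (map f xs) # map (tw W) (map f ys)) =
    lsum W (map (\<lambda>i. brk W ((map (tw W) (map f xs))[i := brk W (map f xs ! i # map f ys)])) [0..<n])"
proof -
  note iso = hom_isoD[OF f] and V_facts = hom_leibniz_nalgD[OF V]
  have brk_f: "\<And>xs. xs \<in> tuples n (carrier V) \<Longrightarrow> brk W (map f xs) = f (brk V xs)"
    using hom_brk[OF iso(1)] by simp
  have tw_map: "\<And>xs. set xs \<subseteq> carrier V \<Longrightarrow> map (tw W) (map f xs) = map f (map (tw V) xs)"
    using hom_tw[OF iso(1)] by auto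
  have Cons_tuple: "\<And>x ys. x \<in> carrier V \<Longrightarrow> ys \<in> tuples (n - 1) (carrier V) \<Longrightarrow>
      x # ys \<in> tuples n (carrier V)"
    using \<open>0 < n\<close> by (auto simp: tuples_def)
  let ?terms = "map (\<lambda>i. brk V ((map (tw V) xs)[i := brk V (xs ! i # ys)])) [0..<n]"
  have "brk W ((map (tw W) (map f xs))[i := brk W (map f xs ! i # map f ys)]) =
      f (brk V ((map (tw V) xs)[i := brk V (xs ! i # ys)]))" if i: "i < n" for i
  proof -
    have "brk W (map f xs ! i # map f ys) = f (brk V (xs ! i # ys))"
      using brk_f[OF Cons_tuple[OF tuples_nth[OF xs i] ys]] i tuples_length[OF xs] by simp
    moreover have "(map (tw V) xs)[i := brk V (xs ! i # ys)] \<in> tuples n (carrier V)"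
      using xs Cons_tuple[OF tuples_nth[OF xs i] ys] by (simp add: V_facts tuples_update tuples_map)
    ultimately show ?thesis
      using xs by (simp add: tw_map tuples_set brk_f del: map_map flip: map_update)
  qed
  then have terms: "map (\<lambda>i. brk W ((map (tw W) (map f xs))[i := brk W (map f xs ! i # map f ys)]))
      [0..<n] = map f ?terms"
    by simp
  have "brk W (brk W (map f xs) # map (tw W) (map f ys)) = f (brk V (brk V xs # map (tw V) ys))"
    using xs ys brk_f[OF Cons_tuple[OF brk_closed[OF V xs] tuples_map[OF ys tw_closed[OF V]]]]
    by (simp add: brk_f tw_map tuples_set del: map_map)
  also have "\<dots> = f (lsum V ?terms)"
    by (simp only: hom_leibniz_identity[OF V xs ys])
  also have "\<dots> = lsum W (map f ?terms)"
    using xs ys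
    by (intro hom_lsum[OF V_facts(1) iso(1) iso(4)[symmetric]])
      (auto simp: V_facts tuples_update tuples_map Cons_tuple tuples_nth)
  finally show ?thesis
    by (simp only: terms)
qed

lemma hom_leibniz_nalg_iso:
  assumes "0 < n" and V: "hom_leibniz_nalg n V" and f: "hom_iso n V W f"
  shows "hom_leibniz_nalg n W"
proof -
  note iso = hom_isoD[OF f] and V_facts = hom_leibniz_nalgD[OF V]
  have tw_map: "\<And>xs. set xs \<subseteq> carrier V \<Longrightarrow> map (tw W) (map f xs) = map f (map (tw V) xs)"
    using hom_tw[OF iso(1)] by auto
  show ?thesis
    unfolding hom_leibniz_nalg_def
    using vspace_hom_iso[OF V_facts(1) f] hom_leibniz_identity_hom_iso[OF assms]
    unfolding iso(3) ball_tuples_image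
    by (auto simp: iso(4) V_facts tuples_update tuples_map tw_map tuples_set inj_on_eq_iff[OF iso(2)]
        simp del: map_map simp flip: map_update homD(2-5)[OF iso(1)])
qed

lemma iso_inv_into_hom:
  assumes V: "hom_leibniz_nalg n V" and f: "hom_iso n V W f"
  shows "hom n W V (inv_into (carrier V) f)"
proof -
  note iso = hom_isoD[OF f]
  have inv_f: "\<And>x. x \<in> carrier V \<Longrightarrow> inv_into (carrier V) f (f x) = x"
    using iso(2) by simp
  have inv_map: "map (inv_into (carrier V) f) (map f xs) = xs" if "set xs \<subseteq> carrier V" for xs
    using that inv_f by (induction xs) auto
  show ?thesis
  proof (rule homI; unfold iso(3) tuples_image; clarify)
    fix xs assume "xs \<in> tuples n (carrier V)"
    then show "inv_into (carrier V) f (brk W (map f xs)) = brk V (map (inv_into (carrier V) f) (map f xs))"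
      by (simp add: inv_f inv_map tuples_set hom_leibniz_nalgD[OF V] del: map_map flip: hom_brk[OF iso(1)])
  qed (simp_all add: inv_f hom_leibniz_nalgD[OF V] flip: homD(2,3,5)[OF iso(1)])
qed

lemma alpha_central_tuple_hom_iso:
  assumes V: "hom_leibniz_nalg n V" and f: "hom_iso n V W f"
    and xs: "length xs = n" "i < n" "xs ! i \<in> carrier W"
      "\<forall>j<n. j \<noteq> i \<longrightarrow> xs ! j \<in> tw W ` kernel W L (p \<circ> inv_into (carrier V) f)"
  obtains ys where "xs = map f ys" "length ys = n" "ys ! i \<in> carrier V"
    "\<forall>j<n. j \<noteq> i \<longrightarrow> ys ! j \<in> tw V ` kernel V L p"
proof -
  note iso = hom_isoD[OF f]
  have tw_kernel: "tw W ` kernel W L (p \<circ> inv_into (carrier V) f) = f ` tw V ` kernel V L p"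
    using iso(2) by (auto simp: kernel_def iso(3) homD[OF iso(1)] image_image)
  have "\<forall>j<n. xs ! j \<in> f ` carrier V"
    using xs tw_closed[OF V] unfolding tw_kernel iso(3) by (auto simp: kernel_def)
  then have "xs \<in> tuples n (f ` carrier V)"
    using xs(1) by (auto simp: tuples_def in_set_conv_nth)
  then obtain ys where ys: "xs = map f ys" and ys_tuple: "ys \<in> tuples n (carrier V)"
    unfolding tuples_image by blast
  have "ys ! j \<in> tw V ` kernel V L p" if "j < n" "j \<noteq> i" for j
  proof -
    have "f (ys ! j) \<in> f ` tw V ` kernel V L p"
      using that xs(4) ys_tuple unfolding tw_kernel ys by (simp add: tuples_length)
    then show ?thesis
      using iso(2) tuples_nth[OF ys_tuple \<open>j < n\<close>] tw_closed[OF V]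
      by (auto simp: kernel_def inj_on_eq_iff)
  qed
  then show ?thesis
    using that ys ys_tuple xs(2) by (simp add: tuples_length tuples_nth)
qed

lemma alpha_central_extension_iso:
  assumes "0 < n" and A: "alpha_central_extension n V L p" and f: "hom_iso n V W f"
  shows "alpha_central_extension n W L (p \<circ> inv_into (carrier V) f)"
proof -
  note iso = hom_isoD[OF f]
  have V: "hom_leibniz_nalg n V" and L: "hom_leibniz_nalg n L" and p: "hom n V L p"
    and p_onto: "p ` carrier V = carrier L"
    using A unfolding alpha_central_extension_def extension_def by auto
  have "brk W xs = zero W"
    if xs: "length xs = n" "i < n" "xs ! i \<in> carrier W"
      "\<forall>j<n. j \<noteq> i \<longrightarrow> xs ! j \<in> tw W ` kernel W L (p \<circ> inv_into (carrier V) f)" for xs i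
  proof -
    obtain ys where ys: "xs = map f ys" "length ys = n" "ys ! i \<in> carrier V"
      "\<forall>j<n. j \<noteq> i \<longrightarrow> ys ! j \<in> tw V ` kernel V L p"
      using alpha_central_tuple_hom_iso[OF V f xs] by blast
    have "brk W xs = f (brk V ys)"
      using hom_brk[OF iso(1) alpha_central_tuple_tuples[OF V ys(2-4)]] ys(1) by simp
    also have "brk V ys = zero V"
      using A xs(2) ys unfolding alpha_central_extension_def by blast
    finally show ?thesis
      using iso(4) by simp
  qed
  then show ?thesis
    using hom_leibniz_nalg_iso[OF \<open>0 < n\<close> V f] L hom_comp[OF iso_inv_into_hom[OF V f] p] p_onto
    unfolding alpha_central_extension_def extension_def iso(3)
    by (auto simp: image_comp iso(2))
qed

text \<open>The definition of universality only quantifies over competitors carried by sets of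
  functions \<open>'a list \<Rightarrow> 'k\<close>. A competitor on any other type is handled by transporting its
  structure along an injection into that type.\<close>

definition transport :: "('c \<Rightarrow> 'd) \<Rightarrow> ('k, 'c) hom_nalg \<Rightarrow> ('k, 'd) hom_nalg" where
  "transport e B = \<lparr>carrier = e ` carrier B,
     add = \<lambda>u v. e (add B (inv_into (carrier B) e u) (inv_into (carrier B) e v)),
     zero = e (zero B),
     smult = \<lambda>c u. e (smult B c (inv_into (carrier B) e u)),
     brk = \<lambda>us. e (brk B (map (inv_into (carrier B) e) us)),
     tw = \<lambda>u. e (tw B (inv_into (carrier B) e u))\<rparr>"

lemma hom_iso_transport:
  fixes B :: "('k::field, 'c) hom_nalg"
  assumes "inj_on e (carrier B)"
  shows "hom_iso n B (transport e B) e"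
proof -
  have inv_map: "map (inv_into (carrier B) e) (map e xs) = xs" if "set xs \<subseteq> carrier B" for xs
    using that assms by (induction xs) auto
  have "hom n B (transport e B) e"
    by (rule homI) (simp_all add: transport_def assms inv_map tuples_set del: map_map)
  then show ?thesis
    using assms by (simp add: hom_iso_def bij_betw_def transport_def)
qed

lemma universal_alpha_central_extensionD:
  fixes K :: "('k::field, 'a) hom_nalg" and B :: "('k, 'c) hom_nalg"
    and e :: "'c \<Rightarrow> ('a list \<Rightarrow> 'k) set"
  assumes "0 < n" and U: "universal_alpha_central_extension n K L \<pi>"
    and B: "alpha_central_extension n B L p" and e: "inj_on e (carrier B)"
  shows "\<exists>h. hom n K B h \<and> (\<forall>x\<in>carrier K. p (h x) = \<pi> x) \<and>
    (\<forall>h'. hom n K B h' \<and> (\<forall>x\<in>carrier K. p (h' x) = \<pi> x) \<longrightarrow> (\<forall>x\<in>carrier K. h' x = h x))"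
proof -
  let ?g = "inv_into (carrier B) e"
  have iso: "hom_iso n B (transport e B) e" by (rule hom_iso_transport[OF e])
  have B_alg: "hom_leibniz_nalg n B"
    using B unfolding alpha_central_extension_def extension_def by blast
  have g_e: "\<And>x. x \<in> carrier B \<Longrightarrow> ?g (e x) = x"
    using e by simp
  have "alpha_central_extension n (transport e B) L (p \<circ> ?g)"
    by (rule alpha_central_extension_iso[OF \<open>0 < n\<close> B iso])
  then have "\<exists>h. hom n K (transport e B) h \<and> (\<forall>x\<in>carrier K. (p \<circ> ?g) (h x) = \<pi> x) \<and>
      (\<forall>h'. hom n K (transport e B) h' \<and> (\<forall>x\<in>carrier K. (p \<circ> ?g) (h' x) = \<pi> x) \<longrightarrow>
        (\<forall>x\<in>carrier K. h' x = h x))"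
    by (rule U[unfolded universal_alpha_central_extension_def, THEN conjunct2, rule_format])
  then obtain h where h: "hom n K (transport e B) h" "\<forall>x\<in>carrier K. (p \<circ> ?g) (h x) = \<pi> x"
    and h_unique: "\<forall>h'. hom n K (transport e B) h' \<and> (\<forall>x\<in>carrier K. (p \<circ> ?g) (h' x) = \<pi> x) \<longrightarrow>
      (\<forall>x\<in>carrier K. h' x = h x)"
    by (elim exE conjE)
  have e_hom: "hom n B (transport e B) e"
    using iso unfolding hom_iso_def by blast
  have lift: "hom n K B (?g \<circ> h)"
    by (rule hom_comp[OF h(1) iso_inv_into_hom[OF B_alg iso]])
  have unique: "\<forall>x\<in>carrier K. h' x = ?g (h x)"
    if h': "hom n K B h'" "\<forall>x\<in>carrier K. p (h' x) = \<pi> x" for h'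
  proof
    fix x assume x: "x \<in> carrier K"
    have "\<forall>y\<in>carrier K. (p \<circ> ?g) ((e \<circ> h') y) = \<pi> y"
      using h'(2) g_e hom_closed[OF h'(1)] by simp
    then have "\<forall>y\<in>carrier K. (e \<circ> h') y = h y"
      using h_unique hom_comp[OF h'(1) e_hom] by blast
    then show "h' x = ?g (h x)"
      using g_e hom_closed[OF h'(1) x] x by force
  qed
  show ?thesis
  proof (intro exI[of _ "?g \<circ> h"] conjI allI impI)
    fix h' assume "hom n K B h' \<and> (\<forall>x\<in>carrier K. p (h' x) = \<pi> x)"
    then show "\<forall>x\<in>carrier K. h' x = (?g \<circ> h) x"
      using unique by simp
  qed (use lift h(2) in simp_all)
qed

lemma universal_alpha_central_extension_unique:
  fixes K :: "('k::field, 'a) hom_nalg" and B :: "('k, 'c) hom_nalg"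
    and e :: "'c \<Rightarrow> ('a list \<Rightarrow> 'k) set"
  assumes "0 < n" and "universal_alpha_central_extension n K L \<pi>"
    and "alpha_central_extension n B L p" and "inj_on e (carrier B)"
    and "hom n K B h1" "\<forall>x\<in>carrier K. p (h1 x) = \<pi> x"
    and "hom n K B h2" "\<forall>x\<in>carrier K. p (h2 x) = \<pi> x"
  shows "\<forall>x\<in>carrier K. h1 x = h2 x"
  using universal_alpha_central_extensionD[OF assms(1-4)] assms(5-8) by metis

text \<open>Injective codes of pairs (x, Y): the marker function is the only member not vanishing
  at [] and determines x, the remaining members are the codes of the elements of Y.\<close>

definition pair_code :: "('y \<Rightarrow> 'a list \<Rightarrow> 'k::field) \<Rightarrow> 'a \<times> 'y set \<Rightarrow> ('a list \<Rightarrow> 'k) set" where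
  "pair_code g p = insert (\<lambda>s. if s = [] \<or> s = [fst p] then 1 else 0) (g ` snd p)"

lemma inj_pair_code:
  fixes g :: "'y \<Rightarrow> 'a list \<Rightarrow> 'k::field"
  assumes g: "inj g" "\<And>y. g y [] = 0"
  shows "inj (pair_code g)"
proof (rule injI)
  fix p q :: "'a \<times> 'y set"
  assume eq: "pair_code g p = pair_code g q"
  have tag: "{\<phi> \<in> pair_code g r. \<phi> [] \<noteq> 0} = {\<lambda>s. if s = [] \<or> s = [fst r] then 1 else 0}"
    and rest: "{\<phi> \<in> pair_code g r. \<phi> [] = 0} = g ` snd r" for r
    using g(2) by (auto simp: pair_code_def)
  have "(\<lambda>s. if s = [] \<or> s = [fst p] then 1 else 0 :: 'k) = (\<lambda>s. if s = [] \<or> s = [fst q] then 1 else 0)"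
    using tag[of p] tag[of q] eq by auto
  then have "fst p = fst q"
    by (metis (mono_tags, lifting) list.inject one_neq_zero not_Cons_self2)
  moreover have "snd p = snd q"
    using rest[of p] rest[of q] eq inj_image_eq_iff[OF g(1)] by auto
  ultimately show "p = q" by (simp add: prod_eq_iff)
qed

lemma inj_pair_code_ind: "inj (pair_code (\<lambda>y. ind [y] :: 'a list \<Rightarrow> 'k::field))"
  by (rule inj_pair_code) (simp_all add: inj_def, simp add: ind_def)

lemma inj_pair_code_shift:
  "inj (pair_code (\<lambda>(f :: 'a list \<Rightarrow> 'k::field) s. if s = [] then 0 else f (tl s)))"
proof (rule inj_pair_code)
  show "inj (\<lambda>(f :: 'a list \<Rightarrow> 'k) s. if s = [] then 0 else f (tl s))"
  proof (rule injI, rule ext)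
    fix f g :: "'a list \<Rightarrow> 'k" and s
    assume "(\<lambda>s. if s = [] then 0 else f (tl s)) = (\<lambda>s. if s = [] then 0 else g (tl s))"
    from fun_cong[OF this, of "undefined # s"] show "f s = g s" by simp
  qed
qed simp

section \<open>The abelianization and perfectness\<close>

locale hom_leibniz_alg =
  fixes n :: nat and K :: "('k::field, 'a) hom_nalg"
  assumes K: "hom_leibniz_nalg n K" and n_pos: "0 < n"
begin

lemma K_vspace: "vspace K"
  by (rule hom_leibniz_nalg_vspace[OF K])

lemma derived_subset: "x \<in> derived n K \<Longrightarrow> x \<in> carrier K"
  unfolding derived_def
  by (induction rule: vspan.induct)
    (use K_vspace brk_closed[OF K] in auto)

lemma brk_in_derived: "xs \<in> tuples n (carrier K) \<Longrightarrow> brk K xs \<in> derived n K"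
  unfolding derived_def by (blast intro: vspan.gen)

lemma subspace_derived: "subspace K (derived n K)"
  unfolding subspace_def using derived_subset
  by (auto simp: derived_def intro: vspan.intros)

lemma tw_derived: "x \<in> derived n K \<Longrightarrow> tw K x \<in> derived n K"
  unfolding derived_def
proof (induction rule: vspan.induct)
  case zero
  then show ?case by (simp add: tw_zero[OF K] vspan.zero)
next
  case (gen x)
  then show ?case
    using brk_in_derived unfolding derived_def by (auto simp: tw_brk[OF K] tuples_map tw_closed[OF K])
next
  case (add x y)
  then show ?case
    using derived_subset unfolding derived_def by (simp add: tw_add[OF K] vspan.add)
next
  case (smult x c)
  then show ?case
    using derived_subset unfolding derived_def by (simp add: tw_smult[OF K] vspan.smult)
qed

abbreviation abel_space :: "('k, 'a set) hom_nalg" where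
  "abel_space \<equiv> quotient_space K (derived n K)"

abbreviation abel_cls :: "'a \<Rightarrow> 'a set" where
  "abel_cls \<equiv> coset K (derived n K)"

abbreviation abel_tw :: "'a set \<Rightarrow> 'a set" where
  "abel_tw \<equiv> quotient_map K (derived n K) (tw K)"

lemma abel_tw_cls: "x \<in> carrier K \<Longrightarrow> abel_tw (abel_cls x) = abel_cls (tw K x)"
  using tw_derived by (intro coset_map[OF K_vspace subspace_derived]) (simp_all add: tw_closed[OF K] tw_add[OF K])

lemma abel_tw_closed: "A \<in> carrier abel_space \<Longrightarrow> abel_tw A \<in> carrier abel_space"
  using abel_tw_cls tw_closed[OF K] by auto

lemma abel_tw_linear:
  assumes "A \<in> carrier abel_space" "B \<in> carrier abel_space"
  shows "abel_tw (add abel_space A B) = add abel_space (abel_tw A) (abel_tw B)"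
    and "abel_tw (smult abel_space c A) = smult abel_space c (abel_tw A)"
  using assms tw_derived
  by (intro quotient_map_add_smult[OF K_vspace subspace_derived];
      simp add: tw_closed[OF K] tw_add[OF K] tw_smult[OF K])+

lemma derived_in_abel_space: "derived n K \<in> carrier abel_space"
  using coset_zero[OF K_vspace subspace_derived] K_vspace
  by (metis image_eqI quotient_space_simps(1) vspace_zero_closed)

lemma abel_tw_derived: "abel_tw (derived n K) = derived n K"
  using abel_tw_cls[of "zero K"] coset_zero[OF K_vspace subspace_derived] tw_zero[OF K] K_vspace by simp

lemma abel_add_derived: "add abel_space (derived n K) (derived n K) = derived n K"
  and abel_smult_derived: "smult abel_space c (derived n K) = derived n K"
  using vspace_zero_add[OF vspace_quotient_space[OF K_vspace subspace_derived] derived_in_abel_space]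
    vspace_smult_zero_right[OF vspace_quotient_space[OF K_vspace subspace_derived]]
  by (simp_all del: quotient_space_simps(3,4))

end

sublocale hom_leibniz_alg \<subseteq> abelian: pair_extension n K abel_space "carrier K \<times> carrier abel_space"
  "\<lambda>_. derived n K" abel_tw
proof
  have abel_vspace: "vspace abel_space"
    by (rule vspace_quotient_space[OF K_vspace subspace_derived])
  then show "vspace abel_space" .
  show "derived n K = lsum abel_space (map (\<lambda>i. derived n K) [0..<n])"
    using lsum_zeros[OF abel_vspace] by simp
  show "\<And>xs. xs \<in> tuples n (carrier K \<times> carrier abel_space) \<Longrightarrow>
      (brk K (map fst xs), derived n K) \<in> carrier K \<times> carrier abel_space"
    using brk_closed[OF K tuples_map_fst] derived_in_abel_space by blast
qed (use K K_vspace vspace_quotient_space[OF K_vspace subspace_derived] derived_in_abel_space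
      abel_tw_derived abel_tw_closed abel_tw_linear abel_add_derived abel_smult_derived abel_tw_cls in
    \<open>auto simp: tw_closed[OF K] simp del: quotient_space_simps(1,3,4)\<close>)

context hom_leibniz_alg
begin

lemma hom_abel_const: "hom n K abelian.P (\<lambda>x. (x, derived n K))"
  using derived_in_abel_space abel_tw_derived abel_add_derived abel_smult_derived
  by (intro abelian.hom_graph) (auto simp del: quotient_space_simps(1,3,4))

lemma hom_abel_cls: "hom n K abelian.P (\<lambda>x. (x, abel_cls x))"
  using abel_tw_cls brk_in_derived coset_eq_zero_iff[OF K_vspace subspace_derived]
  by (intro abelian.hom_graph)
    (auto simp: coset_add[OF K_vspace subspace_derived] coset_smult[OF K_vspace subspace_derived]
      brk_closed[OF K] simp del: quotient_space_simps(3,4))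

end

lemma universal_alpha_central_extension_perfect:
  fixes K :: "('k::field, 'a) hom_nalg"
  assumes "2 \<le> n" and U: "universal_alpha_central_extension n K L \<pi>"
  shows "carrier K \<subseteq> derived n K"
proof -
  have central: "central_extension n K L \<pi>"
    using U unfolding universal_alpha_central_extension_def by blast
  have ace: "alpha_central_extension n K L \<pi>"
    by (rule central_imp_alpha_central_extension[OF assms(1) central])
  interpret hom_leibniz_alg n K
    using central assms(1) unfolding central_extension_def extension_def by unfold_locales auto
  have "alpha_central_extension n abelian.P L (\<pi> \<circ> fst)"
    by (rule abelian.alpha_central_extension_pair_alg[OF ace]) auto
  moreover have "inj_on (pair_code (\<lambda>y. ind [y] :: 'a list \<Rightarrow> 'k)) (carrier abelian.P)"
    by (rule inj_on_subset[OF inj_pair_code_ind]) simp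
  ultimately have "\<forall>x\<in>carrier K. (x, derived n K) = (x, abel_cls x)"
    using universal_alpha_central_extension_unique[OF _ U _ _ hom_abel_const _ hom_abel_cls] assms(1)
    by simp
  then show ?thesis
    using coset_eq_zero_iff[OF K_vspace subspace_derived] by auto
qed

section \<open>Boundaries in the tensor power and the first homology\<close>

context hom_leibniz_alg
begin

text \<open>Dividing the free space on n-tuples by rels gives the n-th tensor power of K modulo the
  image of \<delta>2.\<close>

abbreviation rels :: "('a list \<Rightarrow> 'k) set" where
  "rels \<equiv> fspan (delta2_image n K \<union> tensor_rels n K)"

lemma finite_supp_delta2_pure: "finite (supp (delta2_pure n K xs ys))"
  unfolding delta2_pure_def by (simp add: finite_supp_diff finite_supp_sum)

lemma finite_supp_rels: "f \<in> rels \<Longrightarrow> finite (supp f)"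
  by (rule finite_supp_fspan)
    (auto simp: delta2_image_def tensor_rels_def finite_supp_delta2_pure finite_supp_diff finite_supp_smult)

lemma subspace_rels: "subspace fun_space rels"
  using finite_supp_rels by (intro subspace_fspan) (auto intro: fspan.gen)

lemma delta2_pure_in_rels:
  "xs \<in> tuples n (carrier K) \<Longrightarrow> ys \<in> tuples (n - 1) (carrier K) \<Longrightarrow> delta2_pure n K xs ys \<in> rels"
  by (rule fspan.gen) (auto simp: delta2_image_def)

lemma additivity_rel_in_rels:
  "xs \<in> tuples n (carrier K) \<Longrightarrow> i < n \<Longrightarrow> a \<in> carrier K \<Longrightarrow> b \<in> carrier K \<Longrightarrow>
   (\<lambda>s. ind (xs[i := add K a b]) s - ind (xs[i := a]) s - ind (xs[i := b]) s) \<in> rels"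
  by (rule fspan.gen) (unfold tensor_rels_def, blast)

lemma homogeneity_rel_in_rels:
  "xs \<in> tuples n (carrier K) \<Longrightarrow> i < n \<Longrightarrow> a \<in> carrier K \<Longrightarrow>
   (\<lambda>s. ind (xs[i := smult K c a]) s - c * ind (xs[i := a]) s) \<in> rels"
  by (rule fspan.gen) (unfold tensor_rels_def, blast)

lemma ind_update_zero_in_rels:
  assumes "xs \<in> tuples n (carrier K)" "i < n"
  shows "ind (xs[i := zero K]) \<in> rels"
proof -
  have "(\<lambda>s. ind (xs[i := zero K]) s - ind (xs[i := zero K]) s - ind (xs[i := zero K]) s) \<in> rels"
    using additivity_rel_in_rels[OF assms vspace_zero_closed[OF K_vspace] vspace_zero_closed[OF K_vspace]]
    by (simp add: K_vspace)
  from fspan.smult[OF this, of "-1"] show ?thesis by simp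
qed

lemma pushforward_tw_delta2_pure:
  assumes xs: "xs \<in> tuples n (carrier K)" and ys: "ys \<in> tuples (n - 1) (carrier K)"
  shows "pushforward (map (tw K)) (delta2_pure n K xs ys) = delta2_pure n K (map (tw K) xs) (map (tw K) ys)"
proof -
  have Cons: "xs ! i # ys \<in> tuples n (carrier K)" if "i < n" for i
    using tuples_nth[OF xs that] ys n_pos by (auto simp: tuples_def)
  have "map (tw K) ((map (tw K) xs)[i := brk K (xs ! i # ys)]) =
      (map (tw K) (map (tw K) xs))[i := brk K (map (tw K) xs ! i # map (tw K) ys)]" if "i < n" for i
    using that tuples_length[OF xs] tw_brk[OF K Cons[OF that]] by (simp add: map_update)
  then show ?thesis
    unfolding delta2_pure_def
    by (simp add: pushforward_diff pushforward_sum pushforward_ind finite_supp_sum tw_brk[OF K xs]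
        del: map_map)
qed

lemma tw_relation_in_rels:
  assumes "g \<in> delta2_image n K \<union> tensor_rels n K"
  shows "pushforward (map (tw K)) g \<in> rels"
  using assms
proof (elim UnE)
  assume "g \<in> delta2_image n K"
  then obtain xs ys where "g = delta2_pure n K xs ys" "xs \<in> tuples n (carrier K)" "ys \<in> tuples (n - 1) (carrier K)"
    unfolding delta2_image_def by blast
  then show ?thesis
    by (simp add: pushforward_tw_delta2_pure delta2_pure_in_rels tuples_map tw_closed[OF K])
next
  assume "g \<in> tensor_rels n K"
  then consider
      (additivity) xs i a b where "g = (\<lambda>s. ind (xs[i := add K a b]) s - ind (xs[i := a]) s - ind (xs[i := b]) s)"
        "xs \<in> tuples n (carrier K)" "i < n" "a \<in> carrier K" "b \<in> carrier K"
    | (homogeneity) xs i c a where "g = (\<lambda>s. ind (xs[i := smult K c a]) s - c * ind (xs[i := a]) s)"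
        "xs \<in> tuples n (carrier K)" "i < n" "a \<in> carrier K"
    unfolding tensor_rels_def by blast
  then show ?thesis
  proof cases
    case additivity
    then show ?thesis
      using additivity_rel_in_rels[of "map (tw K) xs" i "tw K a" "tw K b"]
      by (simp add: pushforward_diff pushforward_ind finite_supp_diff map_update tw_add[OF K]
          tuples_map tw_closed[OF K])
  next
    case homogeneity
    then show ?thesis
      using homogeneity_rel_in_rels[of "map (tw K) xs" i "tw K a" c]
      by (simp add: pushforward_diff pushforward_smult pushforward_ind finite_supp_smult map_update
          tw_smult[OF K] tuples_map tw_closed[OF K])
  qed
qed

lemma pushforward_tw_rels: "f \<in> rels \<Longrightarrow> pushforward (map (tw K)) f \<in> rels"
proof (induction rule: fspan.induct)
  case zero
  then show ?case by (simp add: pushforward_def fspan.zero)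
next
  case (gen g)
  then show ?case by (rule tw_relation_in_rels)
next
  case (add f g)
  then show ?case
    by (simp add: pushforward_add finite_supp_rels fspan.add)
next
  case (smult f c)
  then show ?case
    by (simp add: pushforward_smult finite_supp_rels fspan.smult)
qed

lemma delta2_first_in_rels:
  assumes xs: "xs \<in> tuples n (carrier K)" and ys: "ys \<in> tuples (n - 1) (carrier K)"
    and terms: "\<And>i. i < n \<Longrightarrow> ind ((map (tw K) xs)[i := brk K (xs ! i # ys)]) \<in> rels"
  shows "ind (brk K xs # map (tw K) ys) \<in> rels"
proof -
  have "(\<lambda>s. delta2_pure n K xs ys s + (\<Sum>i<n. ind ((map (tw K) xs)[i := brk K (xs ! i # ys)]) s)) \<in> rels"
    using terms by (intro fspan.add delta2_pure_in_rels xs ys fspan_sum) auto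
  then show ?thesis
    by (simp add: delta2_pure_def)
qed

lemma delta2_term_in_rels:
  assumes xs: "xs \<in> tuples n (carrier K)" and ys: "ys \<in> tuples (n - 1) (carrier K)" and i: "i < n"
    and first: "ind (brk K xs # map (tw K) ys) \<in> rels"
    and others: "\<And>j. j < n \<Longrightarrow> j \<noteq> i \<Longrightarrow> ind ((map (tw K) xs)[j := brk K (xs ! j # ys)]) \<in> rels"
  shows "ind ((map (tw K) xs)[i := brk K (xs ! i # ys)]) \<in> rels"
proof -
  let ?term = "\<lambda>j. ind ((map (tw K) xs)[j := brk K (xs ! j # ys)])"
  have "(\<lambda>s. ind (brk K xs # map (tw K) ys) s - delta2_pure n K xs ys s -
      (\<Sum>j\<in>{..<n} - {i}. ?term j s)) \<in> rels"
    using others by (intro fspan_diff first delta2_pure_in_rels xs ys fspan_sum) auto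
  moreover have "(\<lambda>s. ind (brk K xs # map (tw K) ys) s - delta2_pure n K xs ys s -
      (\<Sum>j\<in>{..<n} - {i}. ?term j s)) = ?term i" (is "?lhs = _")
  proof
    fix s
    have "?lhs s = (\<Sum>j<n. ?term j s) - (\<Sum>j\<in>{..<n} - {i}. ?term j s)"
      by (simp add: delta2_pure_def)
    also have "(\<Sum>j<n. ?term j s) = ?term i s + (\<Sum>j\<in>{..<n} - {i}. ?term j s)"
      using i by (subst sum.remove[of "{..<n}" i]) auto
    finally show "?lhs s = ?term i s" by simp
  qed
  ultimately show ?thesis by simp
qed

lemma ind_brk_Cons_central_in_rels:
  assumes ks: "ks \<in> tuples n (carrier K)" and ys: "ys \<in> tuples (n - 1) (carrier K)"
    and j: "j < n - 1" "ys ! j \<in> center n K"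
  shows "ind (brk K ks # map (tw K) ys) \<in> rels"
proof (rule delta2_first_in_rels[OF ks ys])
  fix i assume i: "i < n"
  have "ks ! i # ys \<in> tuples n (carrier K)"
    using tuples_nth[OF ks i] ys n_pos by (auto simp: tuples_def)
  then have "brk K (ks ! i # ys) = zero K"
    using j by (intro brk_center_zero[of _ n K "Suc j"]) auto
  then show "ind ((map (tw K) ks)[i := brk K (ks ! i # ys)]) \<in> rels"
    using ind_update_zero_in_rels[OF tuples_map[OF ks tw_closed[OF K]] i] by simp
qed

lemma ind_update_central_in_rels:
  assumes ms: "ms \<in> tuples n (carrier K)" and i: "0 < i" "i < n"
    and central: "\<forall>j<n. j \<noteq> i \<longrightarrow> ms ! j \<in> center n K" and ks: "ks \<in> tuples n (carrier K)"
  shows "ind ((map (tw K) ms)[i := brk K ks]) \<in> rels"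
proof -
  \<comment> \<open>the i-th term of \<delta>2(X, Y) is the wanted tensor; every other term has a central entry\<close>
  define X where "X = ms[i := hd ks]"
  define Y where "Y = tl ks"
  have ks_split: "ks = hd ks # Y"
    using tuples_length[OF ks] n_pos unfolding Y_def by (cases ks) auto
  have "hd ks \<in> carrier K"
    using tuples_set[OF ks] ks_split by (metis list.set_intros(1) subsetD)
  then have X: "X \<in> tuples n (carrier K)"
    unfolding X_def by (rule tuples_update[OF ms])
  have Y: "Y \<in> tuples (n - 1) (carrier K)"
    unfolding Y_def by (rule tuples_tl[OF ks])
  have X_central: "X ! j \<in> center n K" if "j < n" "j \<noteq> i" for j
    using central that unfolding X_def by simp
  have "ind ((map (tw K) X)[i := brk K (X ! i # Y)]) \<in> rels"
  proof (rule delta2_term_in_rels[OF X Y i(2)])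
    have "brk K X = zero K"
      using brk_center_zero[OF X _ X_central] i by blast
    then show "ind (brk K X # map (tw K) Y) \<in> rels"
      using ind_update_zero_in_rels[of "zero K # map (tw K) Y" 0] Y n_pos tuples_map[OF Y tw_closed[OF K]]
      by (auto simp: tuples_def K_vspace)
    fix j assume j: "j < n" "j \<noteq> i"
    have "X ! j # Y \<in> tuples n (carrier K)"
      using tuples_nth[OF X j(1)] Y n_pos by (auto simp: tuples_def)
    then have "brk K (X ! j # Y) = zero K"
      using X_central[OF j] n_pos by (intro brk_center_zero[of _ n K 0]) auto
    then show "ind ((map (tw K) X)[j := brk K (X ! j # Y)]) \<in> rels"
      using ind_update_zero_in_rels[OF tuples_map[OF X tw_closed[OF K]] j(1)] by simp
  qed
  moreover have "(map (tw K) X)[i := brk K (X ! i # Y)] = (map (tw K) ms)[i := brk K ks]"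
    using i ks_split tuples_length[OF ms] unfolding X_def by (simp add: map_update)
  ultimately show ?thesis by simp
qed

lemma ind_update_brk_in_rels:
  assumes "1 < n" and ms: "ms \<in> tuples n (carrier K)" and i: "i < n"
    and central: "\<forall>j<n. j \<noteq> i \<longrightarrow> ms ! j \<in> center n K" and ks: "ks \<in> tuples n (carrier K)"
  shows "ind ((map (tw K) ms)[i := brk K ks]) \<in> rels"
proof (cases "i = 0")
  case True
  have "tl ms \<in> tuples (n - 1) (carrier K)" "tl ms ! 0 \<in> center n K"
    using tuples_tl[OF ms] central \<open>1 < n\<close> True tuples_length[OF ms] by (auto simp: nth_tl)
  moreover have "(map (tw K) ms)[i := brk K ks] = brk K ks # map (tw K) (tl ms)"
    using True tuples_length[OF ms] n_pos by (cases ms) auto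
  ultimately show ?thesis
    using ind_brk_Cons_central_in_rels[OF ks, of "tl ms" 0] \<open>1 < n\<close> by simp
next
  case False
  then show ?thesis
    using ind_update_central_in_rels[OF ms _ i central ks] by simp
qed

lemma ind_update_derived_in_rels:
  assumes xs: "xs \<in> tuples n (carrier K)" and i: "i < n"
    and brk: "\<And>ks. ks \<in> tuples n (carrier K) \<Longrightarrow> ind (xs[i := brk K ks]) \<in> rels"
    and x: "x \<in> derived n K"
  shows "ind (xs[i := x]) \<in> rels"
  using x unfolding derived_def
proof (induction rule: vspan.induct)
  case zero
  then show ?case by (rule ind_update_zero_in_rels[OF xs i])
next
  case (gen x)
  then show ?case using brk by blast
next
  case (add a b)
  then have "a \<in> carrier K" "b \<in> carrier K"
    using derived_subset unfolding derived_def by blast+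
  from fspan.add[OF additivity_rel_in_rels[OF xs i this] fspan.add[OF add.IH]]
  show ?case by simp
next
  case (smult a c)
  then have "a \<in> carrier K"
    using derived_subset unfolding derived_def by blast
  from fspan.add[OF homogeneity_rel_in_rels[OF xs i this, of c] fspan.smult[OF smult.IH, of c]]
  show ?case by simp
qed

lemma ind_alpha_central_tuple_in_rels:
  assumes "1 < n" and M: "kernel K L \<pi> \<subseteq> center n K" and perfect: "carrier K \<subseteq> derived n K"
    and xs: "length xs = n" "i < n" "xs ! i \<in> carrier K"
      "\<forall>j<n. j \<noteq> i \<longrightarrow> xs ! j \<in> tw K ` kernel K L \<pi>"
  shows "ind xs \<in> rels"
proof -
  obtain ms where ms: "ms \<in> tuples n (carrier K)" "\<forall>j<n. j \<noteq> i \<longrightarrow> ms ! j \<in> center n K"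
    and twisted: "\<And>y. xs[i := y] = (map (tw K) ms)[i := y]"
    using alpha_central_tuple_twisted[OF K M xs(1,2,4)] by blast
  have "ind (xs[i := xs ! i]) \<in> rels"
  proof (rule ind_update_derived_in_rels)
    show "xs \<in> tuples n (carrier K)"
      by (rule alpha_central_tuple_tuples[OF K xs(1,3,4)])
    show "\<And>ks. ks \<in> tuples n (carrier K) \<Longrightarrow> ind (xs[i := brk K ks]) \<in> rels"
      unfolding twisted using ind_update_brk_in_rels[OF \<open>1 < n\<close> ms(1) xs(2) ms(2)] .
  qed (use xs perfect in auto)
  then show ?thesis by simp
qed

abbreviation tensor_space :: "('k, ('a list \<Rightarrow> 'k) set) hom_nalg" where
  "tensor_space \<equiv> quotient_space fun_space rels"

abbreviation tensor_cls :: "('a list \<Rightarrow> 'k) \<Rightarrow> ('a list \<Rightarrow> 'k) set" where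
  "tensor_cls \<equiv> coset fun_space rels"

abbreviation tw_tensor :: "('a list \<Rightarrow> 'k) set \<Rightarrow> ('a list \<Rightarrow> 'k) set" where
  "tw_tensor \<equiv> quotient_map fun_space rels (pushforward (map (tw K)))"

lemma tensor_cls_add: "finite (supp f) \<Longrightarrow> finite (supp g) \<Longrightarrow>
    add tensor_space (tensor_cls f) (tensor_cls g) = tensor_cls (\<lambda>t. f t + g t)"
  and tensor_cls_smult: "finite (supp f) \<Longrightarrow> smult tensor_space c (tensor_cls f) = tensor_cls (\<lambda>t. c * f t)"
  and tensor_cls_zero: "tensor_cls (\<lambda>_. 0) = rels"
  using coset_add[OF vspace_fun_space subspace_rels, of f g]
    coset_smult[OF vspace_fun_space subspace_rels, of f c]
    coset_zero[OF vspace_fun_space subspace_rels]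
  by simp_all

lemma tensor_cls_eq_iff:
  assumes "finite (supp f)" "finite (supp g)"
  shows "tensor_cls f = tensor_cls g \<longleftrightarrow> (\<lambda>t. f t - g t) \<in> rels"
proof -
  have "(\<exists>r\<in>rels. f = (\<lambda>t. g t + r t)) \<longleftrightarrow> (\<lambda>t. f t - g t) \<in> rels"
    by (auto intro!: bexI[of _ "\<lambda>t. f t - g t"])
  then show ?thesis
    using coset_eq_iff[OF vspace_fun_space subspace_rels] assms by simp
qed

lemma tw_tensor_cls: "finite (supp f) \<Longrightarrow> tw_tensor (tensor_cls f) = tensor_cls (pushforward (map (tw K)) f)"
  by (rule coset_map[OF vspace_fun_space subspace_rels])
    (simp_all add: finite_supp_pushforward pushforward_add pushforward_tw_rels)

lemma lsum_tensor_cls: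
  "(\<And>i. i \<in> set is \<Longrightarrow> finite (supp (g i))) \<Longrightarrow>
   lsum tensor_space (map (\<lambda>i. tensor_cls (g i)) is) = tensor_cls (\<lambda>t. \<Sum>i\<leftarrow>is. g i t)"
proof (induction "is")
  case Nil
  then show ?case by (simp add: tensor_cls_zero)
next
  case (Cons j js)
  have "finite (supp (\<lambda>t. \<Sum>i\<leftarrow>js. g i t))"
    using Cons.prems by (intro finite_supp_sum_list) simp
  then show ?case
    using Cons by (simp add: tensor_cls_add del: quotient_space_simps)
qed

definition combination :: "('k \<times> 'a list) list \<Rightarrow> bool" where
  "combination ps \<longleftrightarrow> (\<forall>(c, t)\<in>set ps. t \<in> tuples n (carrier K))"

lemma combination_simps [simp]:
  "combination []"
  "combination ((c, t) # ps) \<longleftrightarrow> t \<in> tuples n (carrier K) \<and> combination ps"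
  "combination (ps @ qs) \<longleftrightarrow> combination ps \<and> combination qs"
  by (auto simp: combination_def)

lemma combination_scale: "combination ps \<Longrightarrow> combination (map (\<lambda>(c, t). (a * c, t)) ps)"
  by (induction ps) auto

lemma combination_twist: "combination ps \<Longrightarrow> combination (map (\<lambda>(c, t). (c, map (tw K) t)) ps)"
  by (induction ps) (auto simp: tuples_map tw_closed[OF K])

lemma delta1_closed: "combination ps \<Longrightarrow> delta1 K ps \<in> carrier K"
  by (induction ps) (auto simp: K_vspace brk_closed[OF K])

lemma delta1_append:
  "combination ps \<Longrightarrow> combination qs \<Longrightarrow> delta1 K (ps @ qs) = add K (delta1 K ps) (delta1 K qs)"
  by (induction ps) (auto simp: K_vspace brk_closed[OF K] delta1_closed
      vspace_add_assoc)

lemma delta1_scale: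
  "combination ps \<Longrightarrow> delta1 K (map (\<lambda>(c, t). (a * c, t)) ps) = smult K a (delta1 K ps)"
  by (induction ps) (auto simp: K_vspace brk_closed[OF K] delta1_closed
      vspace_smult_add_right vspace_smult_smult)

lemma delta1_twist:
  "combination ps \<Longrightarrow> delta1 K (map (\<lambda>(c, t). (c, map (tw K) t)) ps) = tw K (delta1 K ps)"
  by (induction ps) (auto simp: K_vspace brk_closed[OF K] delta1_closed
      tw_zero[OF K] tw_add[OF K] tw_smult[OF K] tw_brk[OF K])

text \<open>The graph of the map induced by \<delta>1 on tensor_space.\<close>

definition tensor_carrier :: "('a \<times> ('a list \<Rightarrow> 'k) set) set" where
  "tensor_carrier = {(delta1 K ps, tensor_cls (formal ps)) | ps. combination ps}"

lemma tensor_carrierI: "combination ps \<Longrightarrow> (delta1 K ps, tensor_cls (formal ps)) \<in> tensor_carrier"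
  unfolding tensor_carrier_def by blast

lemma tensor_carrierE:
  assumes "x \<in> tensor_carrier"
  obtains ps where "combination ps" "x = (delta1 K ps, tensor_cls (formal ps))"
  using assms unfolding tensor_carrier_def by blast

lemma brk_in_tensor_carrier: "xs \<in> tuples n (carrier K) \<Longrightarrow> (brk K xs, tensor_cls (ind xs)) \<in> tensor_carrier"
  using tensor_carrierI[of "[(1, xs)]"]
  by (simp add: K_vspace brk_closed[OF K] formal_def)

lemma tensor_cls_ind_update_add:
  assumes "xs \<in> tuples n (carrier K)" "i < n" "a \<in> carrier K" "b \<in> carrier K"
  shows "tensor_cls (ind (xs[i := add K a b])) = add tensor_space (tensor_cls (ind (xs[i := a]))) (tensor_cls (ind (xs[i := b])))"
  using additivity_rel_in_rels[OF assms]
  by (simp add: tensor_cls_add tensor_cls_eq_iff finite_supp_add algebra_simps del: quotient_space_simps)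

lemma tensor_cls_ind_update_smult:
  assumes "xs \<in> tuples n (carrier K)" "i < n" "a \<in> carrier K"
  shows "tensor_cls (ind (xs[i := smult K c a])) = smult tensor_space c (tensor_cls (ind (xs[i := a])))"
  using homogeneity_rel_in_rels[OF assms, of c]
  by (simp add: tensor_cls_smult tensor_cls_eq_iff finite_supp_smult del: quotient_space_simps)

lemma tensor_cls_ind_leibniz:
  assumes "xs \<in> tuples n (carrier K)" "ys \<in> tuples (n - 1) (carrier K)"
  shows "tensor_cls (ind (brk K xs # map (tw K) ys)) =
    lsum tensor_space (map (\<lambda>i. tensor_cls (ind ((map (tw K) xs)[i := brk K (xs ! i # ys)]))) [0..<n])"
proof -
  have "(\<Sum>i\<leftarrow>[0..<n]. f i) = (\<Sum>i<n. f i)" for f :: "nat \<Rightarrow> 'k"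
    by (simp add: interv_sum_list_conv_sum_set_nat atLeast0LessThan)
  then show ?thesis
    using delta2_pure_in_rels[OF assms]
    by (simp add: lsum_tensor_cls tensor_cls_eq_iff finite_supp_sum delta2_pure_def)
qed

lemma tensor_carrier_subset: "tensor_carrier \<subseteq> carrier K \<times> carrier tensor_space"
  by (auto elim!: tensor_carrierE simp: delta1_closed)

lemma tensor_carrier_closed:
  assumes "x \<in> tensor_carrier" "y \<in> tensor_carrier"
  shows "(add K (fst x) (fst y), add tensor_space (snd x) (snd y)) \<in> tensor_carrier"
    and "(smult K c (fst x), smult tensor_space c (snd x)) \<in> tensor_carrier"
    and "(tw K (fst x), tw_tensor (snd x)) \<in> tensor_carrier"
proof -
  obtain ps qs where x: "combination ps" "x = (delta1 K ps, tensor_cls (formal ps))"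
    and y: "combination qs" "y = (delta1 K qs, tensor_cls (formal qs))"
    using assms by (auto elim!: tensor_carrierE)
  show "(add K (fst x) (fst y), add tensor_space (snd x) (snd y)) \<in> tensor_carrier"
    using x y tensor_carrierI[of "ps @ qs"]
    by (simp add: delta1_append formal_append tensor_cls_add del: quotient_space_simps)
  show "(smult K c (fst x), smult tensor_space c (snd x)) \<in> tensor_carrier"
    using x tensor_carrierI[OF combination_scale]
    by (simp add: delta1_scale formal_scale tensor_cls_smult del: quotient_space_simps)
  show "(tw K (fst x), tw_tensor (snd x)) \<in> tensor_carrier"
    using x tensor_carrierI[OF combination_twist]
    by (simp add: delta1_twist tw_tensor_cls pushforward_formal case_prod_beta)
qed

lemma tw_tensor_linear:
  assumes "A \<in> carrier tensor_space" "B \<in> carrier tensor_space"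
  shows "tw_tensor (add tensor_space A B) = add tensor_space (tw_tensor A) (tw_tensor B)"
    and "tw_tensor (smult tensor_space c A) = smult tensor_space c (tw_tensor A)"
  using assms
  by (intro quotient_map_add_smult[OF vspace_fun_space subspace_rels];
      simp add: finite_supp_pushforward pushforward_add pushforward_smult pushforward_tw_rels)+

end

sublocale hom_leibniz_alg \<subseteq> tensor: pair_extension n K tensor_space tensor_carrier
  "\<lambda>xs. tensor_cls (ind xs)" tw_tensor
proof
  show "(brk K (map fst xs), tensor_cls (ind (map fst xs))) \<in> tensor_carrier"
    if "xs \<in> tuples n tensor_carrier" for xs
    using that tensor_carrier_subset by (intro brk_in_tensor_carrier) (force simp: tuples_def)
  show "(zero K, zero tensor_space) \<in> tensor_carrier"
    using tensor_carrierI[of "[]"] by (simp add: tensor_cls_zero)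
qed (use K vspace_quotient_space[OF vspace_fun_space subspace_rels] tensor_carrier_subset
    tensor_carrier_closed tw_tensor_linear tensor_cls_ind_update_add tensor_cls_ind_update_smult tensor_cls_ind_leibniz in
  \<open>simp_all add: tw_tensor_cls pushforward_ind\<close>)

context hom_leibniz_alg
begin

lemma delta1_derived:
  assumes "x \<in> derived n K"
  obtains ps where "combination ps" "delta1 K ps = x"
proof -
  from assms have "\<exists>ps. combination ps \<and> delta1 K ps = x"
    unfolding derived_def
  proof (induction rule: vspan.induct)
    case zero
    show ?case by (intro exI[of _ "[]"]) simp
  next
    case (gen x)
    then obtain t where "t \<in> tuples n (carrier K)" "x = brk K t" by blast
    then show ?case
      by (intro exI[of _ "[(1, t)]"]) (simp add: K_vspace brk_closed[OF K])
  next
    case (add x y)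
    then obtain ps qs where "combination ps" "delta1 K ps = x" "combination qs" "delta1 K qs = y"
      by blast
    then show ?case
      by (intro exI[of _ "ps @ qs"]) (simp add: delta1_append)
  next
    case (smult x c)
    then obtain ps where "combination ps" "delta1 K ps = x" by blast
    then show ?case
      by (intro exI[of _ "map (\<lambda>(a, t). (c * a, t)) ps"]) (simp add: delta1_scale combination_scale)
  qed
  then show ?thesis using that by blast
qed

lemma section_delta1:
  assumes h: "hom n K tensor.P h" and fst_h: "\<forall>x\<in>carrier K. fst (h x) = x" and ps: "combination ps"
  shows "h (delta1 K ps) = (delta1 K ps, tensor_cls (formal ps))"
  using ps
proof (induction ps)
  case Nil
  have "h (zero K) = zero tensor.P"
    by (rule hom_zero[OF K_vspace tensor.vspace_pair_alg h])
  then show ?case by (simp add: tensor_cls_zero)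
next
  case (Cons p ps)
  obtain c t where p: "p = (c, t)" by (cases p)
  with Cons.prems have t: "t \<in> tuples n (carrier K)" and ps: "combination ps" by simp_all
  have "map fst (map h t) = t"
    using fst_h tuples_set[OF t] by (induction t) auto
  then have "h (brk K t) = (brk K t, tensor_cls (ind t))"
    using hom_brk[OF h t] by simp
  then show ?case
    using p Cons.IH[OF ps] homD(2,3)[OF h] delta1_closed[OF ps] brk_closed[OF K t]
      K_vspace
    by (simp add: tensor_cls_add tensor_cls_smult finite_supp_smult del: quotient_space_simps)
qed

lemma HL1_zero_of_section:
  assumes h: "hom n K tensor.P h" and fst_h: "\<forall>x\<in>carrier K. fst (h x) = x"
  shows "HL1_zero n K"
  unfolding HL1_zero_def
proof (intro allI impI)
  fix ps :: "('k \<times> 'a list) list"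
  assume "(\<forall>(c, t)\<in>set ps. t \<in> tuples n (carrier K)) \<and> delta1 K ps = zero K"
  then have ps: "combination ps" and zero: "delta1 K ps = zero K"
    unfolding combination_def by blast+
  have "tensor_cls (formal ps) = rels"
    using section_delta1[OF h fst_h ps] section_delta1[OF h fst_h, of "[]"] zero by (simp add: tensor_cls_zero)
  then show "formal ps \<in> fspan (delta2_image n K \<union> tensor_rels n K)"
    using coset_eq_zero_iff[OF vspace_fun_space subspace_rels, of "formal ps"] by simp
qed

lemma alpha_central_extension_tensor:
  assumes "1 < n" and central: "central_extension n K L \<pi>" and perfect: "carrier K \<subseteq> derived n K"
  shows "alpha_central_extension n tensor.P L (\<pi> \<circ> fst)"
proof (rule tensor.alpha_central_extension_pair_alg)
  show "alpha_central_extension n K L \<pi>"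
    by (rule central_imp_alpha_central_extension[OF _ central]) (use \<open>1 < n\<close> in simp)
  show "\<exists>w. (x, w) \<in> tensor_carrier" if "x \<in> carrier K" for x
    using that perfect by (blast elim: delta1_derived intro: tensor_carrierI)
  have M: "kernel K L \<pi> \<subseteq> center n K"
    using central unfolding central_extension_def by blast
  show "tensor_cls (ind xs) = zero tensor_space"
    if "length xs = n" "i < n" "xs ! i \<in> carrier K" "\<forall>j<n. j \<noteq> i \<longrightarrow> xs ! j \<in> tw K ` kernel K L \<pi>"
    for xs i
    using ind_alpha_central_tuple_in_rels[OF \<open>1 < n\<close> M perfect that]
      coset_eq_zero_iff[OF vspace_fun_space subspace_rels, of "ind xs"] by simp
qed

lemma universal_alpha_central_extension_section:
  assumes "1 < n" and U: "universal_alpha_central_extension n K L \<pi>"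
    and perfect: "carrier K \<subseteq> derived n K"
  obtains h where "hom n K tensor.P h" "\<forall>x\<in>carrier K. fst (h x) = x"
proof -
  have central: "central_extension n K L \<pi>"
    using U unfolding universal_alpha_central_extension_def by blast
  have "inj_on (pair_code (\<lambda>f s. if s = [] then 0 else f (tl s)) :: _ \<Rightarrow> ('a list \<Rightarrow> 'k) set)
      (carrier tensor.P)"
    by (rule inj_on_subset[OF inj_pair_code_shift]) simp
  then have "\<exists>h. hom n K tensor.P h \<and> (\<forall>x\<in>carrier K. (\<pi> \<circ> fst) (h x) = \<pi> x) \<and>
      (\<forall>h'. hom n K tensor.P h' \<and> (\<forall>x\<in>carrier K. (\<pi> \<circ> fst) (h' x) = \<pi> x) \<longrightarrow>
        (\<forall>x\<in>carrier K. h' x = h x))"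
    using alpha_central_extension_tensor[OF assms(1) central perfect] n_pos
    by (intro universal_alpha_central_extensionD[OF _ U]) (simp_all add: comp_def)
  then obtain h where h: "hom n K tensor.P h" "\<forall>x\<in>carrier K. (\<pi> \<circ> fst) (h x) = \<pi> x"
    by blast
  have "inj_on (\<lambda>x. {ind [x] :: 'a list \<Rightarrow> 'k}) (carrier K)"
    by (simp add: inj_on_def)
  from universal_alpha_central_extension_unique[OF n_pos U _ this hom_id _ hom_comp[OF h(1) tensor.hom_fst]]
  have "\<forall>x\<in>carrier K. id x = (fst \<circ> h) x"
    using h(2) central_imp_alpha_central_extension[OF _ central] \<open>1 < n\<close> by simp
  then show ?thesis
    using that h(1) by simp
qed

end

lemma universal_alpha_central_extension_HL1_zero:
  fixes K :: "('k::field, 'a) hom_nalg"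
  assumes "2 \<le> n" and U: "universal_alpha_central_extension n K L \<pi>"
  shows "HL1_zero n K"
proof -
  have perfect: "carrier K \<subseteq> derived n K"
    by (rule universal_alpha_central_extension_perfect[OF assms])
  interpret hom_leibniz_alg n K
    using U assms(1)
    unfolding universal_alpha_central_extension_def central_extension_def extension_def
    by unfold_locales auto
  obtain h where "hom n K tensor.P h" "\<forall>x\<in>carrier K. fst (h x) = x"
    using universal_alpha_central_extension_section[OF _ U perfect] assms(1) by auto
  then show ?thesis
    by (rule HL1_zero_of_section)
qed

theorem theorem3p11:
  fixes K :: "('k::field, 'a) hom_nalg" and L :: "('k, 'b) hom_nalg" and \<pi> :: "'a \<Rightarrow> 'b"
  assumes "n \<ge> 2"
    and "universal_alpha_central_extension n K L \<pi>"
  shows "HL0_zero n K \<and> HL1_zero n K"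
  using universal_alpha_central_extension_perfect[OF assms] universal_alpha_central_extension_HL1_zero[OF assms]
  unfolding HL0_zero_def by blast

end
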